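(* Assume the setting, hypotheses and Rothe scheme described in the context, and for every sufficiently small $\tau=T/N$ let $\{u_\tau^n\}_{n=1}^N$, $\{\xi_\tau^n\}_{n=1}^N$ be a solution of Problem $\mathcal P_\tau$, with $\bar u_\tau,u_\tau,\bar\xi_\tau$ defined as in the context. Then there is a constant $c>0$ independent of $\tau$ such that $$\|\bar u_\tau\|_{L^2(0,T;V)}\le c,\quad \|u_\tau\|_{L^2(0,T;V)}\le c,\quad \|\bar u_\tau\|_{L^\infty(0,T;H)}\le c,\quad \|u_\tau\|_{L^\infty(0,T;H)}\le c,$$ $$\|\bar\xi_\tau\|_{L^2(0,T;U^* )}\le c,\quad \|\bar u_\tau\|_{M^{2,2}(0,T;V,V^* )}\le c,\quad \|u_\tau'\|_{L^2(0,T;V^* )}\le c.$$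
   Context: $V$ is a real reflexive separable Banach space with norm $\|\cdot\|$, $H$ is a real separable Hilbert space with inner product $(\cdot,\cdot)$ and norm $|\cdot|$, identified with its dual, and $V\subset H\subset V^*$ with dense continuous embeddings, the embedding $V\subset H$ being compact; $\langle\cdot,\cdot\rangle$ is the $V^*\times V$ duality pairing, with $\langle u,v\rangle=(u,v)$ for $u\in H$, $v\in V$. $U$ is a reflexive Banach space, $T>0$. For locally Lipschitz $J\colon U\to\mathbb R$, $J^0(x;v)=\limsup_{y\to x,\lambda\downarrow0}\frac{J(y+\lambda v)-J(y)}{\lambda}$ and $\partial J(x)=\{\xi\in U^*:J^0(x;v)\ge\langle\xi,v\rangle_{U^*\times U}\ \forall v\in U\}$ (Clarke subdifferential); $\iota^*$ is the adjoint of $\iota$. Hypotheses: (H(A)) $A\colon V\to V^*$ is pseudomonotone (whenever $v_n\to v$ weakly in $V$ and $\limsup_n\langle Av_n,v_n-v\rangle\le0$, then $\langle Av,v-y\rangle\le\liminf_n\langle Av_n,v_n-y\rangle$ for all $y\in V$), $\|Av\|_{V^*}\le a+b\|v\|$ ($a\ge0,b>0$), $\langle Av,v\rangle\ge\alpha\|v\|^2-\beta|v|^2$ ($\alpha>0,\beta\ge0$) for all $v\in V$. (H(J)) $J$ is locally Lipschitz and $\|\xi\|_{U^*}\le d(1+\|u\|_U)$ for all $u\in U$, $\xi\in\partial J(u)$, $d>0$. (H($\iota$)) $\iota\colon V\to U$ is linear, continuous, compact, and $\iota=\iota_2\circ\iota_1$ where $Z$ is a Banach space with $V\subset Z\subset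 H$, $V\subset Z$ compact, $Z\subset H$ continuous, $\iota_1\colon V\to Z$ the identity and $\iota_2\colon Z\to U$ linear continuous. (H(f)) $f\in L^2(0,T;V^* )$. (H(0)) $u_0\in H$. Rothe scheme: for $N\in\mathbb N$, $\tau=T/N$, an element $u_\tau^0\in V$ is given for each $\tau$, such that $u_\tau^0\to u_0$ strongly in $H$ as $\tau\to0$ and $\|u_\tau^0\|\le c_0/\sqrt\tau$ with $c_0$ independent of $\tau$. Set $f_\tau^1=\frac1\tau\int_0^\tau f\,dt$ and $f_\tau^n=\frac{3}{2\tau}\int_{(n-1)\tau}^{n\tau}f\,dt-\frac1{2\tau}\int_{(n-2)\tau}^{(n-1)\tau}f\,dt$, $n=2,\dots,N$. Problem $\mathcal P_\tau$: find $\{u_\tau^n\}_{n=1}^N\subset V$ and $\{\xi_\tau^n\}_{n=1}^N\subset U^*$ with $\frac1\tau(u_\tau^1-u_\tau^0)+Au_\tau^1+\iota^*\xi_\tau^1=f_\tau^1$, $\xi_\tau^1\in\partial J(\iota u_\tau^1)$, and for $n=2,\dots,N$: $\frac1\tau(\frac32u_\tau^n-2u_\tau^{n-1}+\frac12u_\tau^{n-2})+Au_\tau^n+\iota^*\xi_\tau^n=f_\tau^n$, $\xi_\tau^n\in\partial J(\iota u_\tau^n)$. Interpolants: $\bar u_\tau(0)=u_\tau^0$, $\bar u_\tau(t)=u_\tau^n$ and $\bar\xi_\tau(t)=\xi_\tau^n$ for $t\in((n-1)\tau,n\tau]$, $n=1,\dots,N$; $u_\tau(t)=\frac32u_\tau^1-\frac12u_\tau^0+(u_\tau^1-u_\tau^0)\frac{t-\tau}{\tau}$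 for $t\in[0,\tau]$, and $u_\tau(t)=\frac32u_\tau^n-\frac12u_\tau^{n-1}+(\frac32u_\tau^n-2u_\tau^{n-1}+\frac12u_\tau^{n-2})\frac{t-n\tau}{\tau}$ for $t\in[(n-1)\tau,n\tau]$, $n=2,\dots,N$; $u_\tau'$ is its time derivative. Space $M^{2,2}$: for $x\colon[0,T]\to V^*$, $\|x\|_{BV^2(0,T;V^* )}^2=\sup_\pi\sum_i\|x(b_i)-x(a_i)\|_{V^*}^2$, the supremum over all finite partitions $\pi$ of $[0,T]$ into disjoint open intervals $(a_i,b_i)$ whose closures cover $[0,T]$; $M^{2,2}(0,T;V,V^* )=L^2(0,T;V)\cap BV^2(0,T;V^* )$ with norm $\|\cdot\|_{L^2(0,T;V)}+\|\cdot\|_{BV^2(0,T;V^* )}$. *)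

theory Defs
  imports "HOL-Analysis.Analysis" "HOL-Probability.Essential_Supremum"
begin

definition separable_space :: "'a::metric_space itself \<Rightarrow> bool" where
  "separable_space _ \<longleftrightarrow> (\<exists>D::'a set. countable D \<and> closure D = UNIV)"

definition reflexive_space :: "'a::real_normed_vector itself \<Rightarrow> bool" where
  "reflexive_space _ \<longleftrightarrow>
     (\<forall>\<phi> :: ('a \<Rightarrow>\<^sub>L real) \<Rightarrow>\<^sub>L real. \<exists>x::'a. \<forall>g. blinfun_apply \<phi> g = blinfun_apply g x)"

definition compact_operator :: "('a::real_normed_vector \<Rightarrow> 'b::real_normed_vector) \<Rightarrow> bool" where
  "compact_operator T \<longleftrightarrow> bounded_linear T \<and> (\<forall>B. bounded B \<longrightarrow> compact (closure (T ` B)))"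

definition weak_conv :: "(nat \<Rightarrow> 'a::real_normed_vector) \<Rightarrow> 'a \<Rightarrow> bool" where
  "weak_conv xs x \<longleftrightarrow> (\<forall>g :: 'a \<Rightarrow>\<^sub>L real. (\<lambda>n. blinfun_apply g (xs n)) \<longlonglongrightarrow> blinfun_apply g x)"

definition pseudomonotone :: "('v::real_normed_vector \<Rightarrow> ('v \<Rightarrow>\<^sub>L real)) \<Rightarrow> bool" where
  "pseudomonotone A \<longleftrightarrow>
     (\<forall>vs v. weak_conv vs v \<and> limsup (\<lambda>n. ereal (blinfun_apply (A (vs n)) (vs n - v))) \<le> 0 \<longrightarrow>
        (\<forall>y. ereal (blinfun_apply (A v) (v - y)) \<le> liminf (\<lambda>n. ereal (blinfun_apply (A (vs n)) (vs n - y)))))"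

definition locally_lipschitz :: "('a::metric_space \<Rightarrow> real) \<Rightarrow> bool" where
  "locally_lipschitz J \<longleftrightarrow> (\<forall>x. \<exists>S L. open S \<and> x \<in> S \<and> L-lipschitz_on S J)"

definition clarke_dd :: "('u::real_normed_vector \<Rightarrow> real) \<Rightarrow> 'u \<Rightarrow> 'u \<Rightarrow> ereal" where
  "clarke_dd J x v = Limsup (nhds x \<times>\<^sub>F at_right 0)
      (\<lambda>(y, l). ereal ((J (y + l *\<^sub>R v) - J y) / l))"

definition clarke_subdiff :: "('u::real_normed_vector \<Rightarrow> real) \<Rightarrow> 'u \<Rightarrow> ('u \<Rightarrow>\<^sub>L real) set" where
  "clarke_subdiff J x = {\<xi>. \<forall>v. ereal (blinfun_apply \<xi> v) \<le> clarke_dd J x v}"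

text \<open>Element of V seen in V* via V \<subset> H = H* \<subset> V*, and element of H seen in V*.\<close>
definition toVs :: "('v::real_normed_vector \<Rightarrow> 'h::real_inner) \<Rightarrow> 'v \<Rightarrow> ('v \<Rightarrow>\<^sub>L real)" where
  "toVs j v = Blinfun (\<lambda>w. inner (j v) (j w))"

definition HtoVs :: "('v::real_normed_vector \<Rightarrow> 'h::real_inner) \<Rightarrow> 'h \<Rightarrow> ('v \<Rightarrow>\<^sub>L real)" where
  "HtoVs j h = Blinfun (\<lambda>w. inner h (j w))"

definition ensqrt :: "ennreal \<Rightarrow> ennreal" where
  "ensqrt x = (if x = top then top else ennreal (sqrt (enn2real x)))"

definition L2_norm :: "real \<Rightarrow> (real \<Rightarrow> 'a::real_normed_vector) \<Rightarrow> ennreal" where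
  "L2_norm T g = ensqrt (\<integral>\<^sup>+ t. ennreal ((norm (g t))\<^sup>2) \<partial>lebesgue_on {0..T})"

definition Linf_norm :: "real \<Rightarrow> (real \<Rightarrow> 'a::real_normed_vector) \<Rightarrow> ereal" where
  "Linf_norm T g = esssup (lebesgue_on {0..T}) (\<lambda>t. ereal (norm (g t)))"

definition partitions :: "real \<Rightarrow> real list set" where
  "partitions T = {p. sorted_wrt (<) p \<and> length p \<ge> 2 \<and> hd p = 0 \<and> last p = T}"

definition BV2_norm :: "real \<Rightarrow> (real \<Rightarrow> 'a::real_normed_vector) \<Rightarrow> ennreal" where
  "BV2_norm T x = ensqrt (SUP p \<in> partitions T.
      ennreal (\<Sum>i < length p - 1. (norm (x (p ! Suc i) - x (p ! i)))\<^sup>2))"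

definition M22_norm :: "real \<Rightarrow> ('v::real_normed_vector \<Rightarrow> 'h::real_inner) \<Rightarrow> (real \<Rightarrow> 'v) \<Rightarrow> ennreal" where
  "M22_norm T j x = L2_norm T x + BV2_norm T (\<lambda>t. toVs j (x t))"

definition ftau :: "real \<Rightarrow> (real \<Rightarrow> ('v::real_normed_vector \<Rightarrow>\<^sub>L real)) \<Rightarrow> nat \<Rightarrow> nat \<Rightarrow> 'v \<Rightarrow> real" where
  "ftau T f N n v = (let \<tau> = T / real N in
     if n = 1 then (1 / \<tau>) * (\<integral>t. blinfun_apply (f t) v \<partial>lebesgue_on {0..\<tau>})
     else (3 / (2 * \<tau>)) * (\<integral>t. blinfun_apply (f t) v \<partial>lebesgue_on {(real n - 1) * \<tau> .. real n * \<tau>})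
        - (1 / (2 * \<tau>)) * (\<integral>t. blinfun_apply (f t) v \<partial>lebesgue_on {(real n - 2) * \<tau> .. (real n - 1) * \<tau>}))"

text \<open>Problem P_tau: us n = u_tau^n (n = 0..N, us 0 the given initial value), xis n = xi_tau^n.
  Equations in V* are stated by testing with every v \<in> V; \<iota>* \<xi> applied to v is \<xi>(\<iota> v).\<close>
definition rothe_solution ::
  "('v::real_normed_vector \<Rightarrow> 'h::real_inner) \<Rightarrow> ('v \<Rightarrow> ('v \<Rightarrow>\<^sub>L real)) \<Rightarrow> ('v \<Rightarrow> 'u::real_normed_vector)
   \<Rightarrow> ('u \<Rightarrow> real) \<Rightarrow> (real \<Rightarrow> ('v \<Rightarrow>\<^sub>L real)) \<Rightarrow> real \<Rightarrow> nat
   \<Rightarrow> (nat \<Rightarrow> 'v) \<Rightarrow> (nat \<Rightarrow> ('u \<Rightarrow>\<^sub>L real)) \<Rightarrow> bool" where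
  "rothe_solution j A iota J f T N us xis \<longleftrightarrow> (let \<tau> = T / real N in
     (\<forall>v. inner (j (us 1 - us 0)) (j v) / \<tau> + blinfun_apply (A (us 1)) v
            + blinfun_apply (xis 1) (iota v) = ftau T f N 1 v)
     \<and> xis 1 \<in> clarke_subdiff J (iota (us 1))
     \<and> (\<forall>n \<in> {2..N}.
          (\<forall>v. inner (j ((3/2) *\<^sub>R us n - 2 *\<^sub>R us (n - 1) + (1/2) *\<^sub>R us (n - 2))) (j v) / \<tau>
               + blinfun_apply (A (us n)) v + blinfun_apply (xis n) (iota v) = ftau T f N n v)
          \<and> xis n \<in> clarke_subdiff J (iota (us n))))"

definition ubar :: "real \<Rightarrow> nat \<Rightarrow> (nat \<Rightarrow> 'v) \<Rightarrow> real \<Rightarrow> 'v" where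
  "ubar T N us t = (if t \<le> 0 then us 0 else us (nat \<lceil>t / (T / real N)\<rceil>))"

definition xibar :: "real \<Rightarrow> nat \<Rightarrow> (nat \<Rightarrow> 'a) \<Rightarrow> real \<Rightarrow> 'a" where
  "xibar T N xis t = xis (nat \<lceil>t / (T / real N)\<rceil>)"

definition uhat :: "real \<Rightarrow> nat \<Rightarrow> (nat \<Rightarrow> 'v::real_vector) \<Rightarrow> real \<Rightarrow> 'v" where
  "uhat T N us t = (let \<tau> = T / real N; n = max 1 (nat \<lceil>t / \<tau>\<rceil>) in
     if n = 1 then (3/2) *\<^sub>R us 1 - (1/2) *\<^sub>R us 0 + ((t - \<tau>) / \<tau>) *\<^sub>R (us 1 - us 0)
     else (3/2) *\<^sub>R us n - (1/2) *\<^sub>R us (n - 1)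
          + ((t - real n * \<tau>) / \<tau>) *\<^sub>R ((3/2) *\<^sub>R us n - 2 *\<^sub>R us (n - 1) + (1/2) *\<^sub>R us (n - 2)))"

end

theory Submission
  imports Defs
begin

(* Testing the n-th step of the scheme with u^n and using the BDF2 identity
     4 (3/2 a - 2 b + 1/2 c, a) = |a|^2 + |2a - b|^2 - |b|^2 - |2b - c|^2 + |a - 2b + c|^2
   makes E_n = |u^n|^2 + |2u^n - u^(n-1)|^2 telescope.  Coercivity of A controls the V-norm, and the
   growth of the Clarke subgradient is absorbed by Ehrling's inequality
   |iota v|^2 <= eps ||v||^2 + C_eps |v|^2, which holds because iota factors through the compact
   embedding of V into Z.  A discrete Gronwall inequality then bounds max_n |u^n| and
   tau * sum_n ||u^n||^2 uniformly in tau.  Read as an equation in V*, the scheme bounds the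
   difference quotients, hence u_tau' and xi_tau in L^2, and
     u^(l+1) - u^l = (u^l - u^(l-1))/3 + (2/3) (tau * difference quotient at step l+1)
   bounds the sums of squared jumps, i.e. the BV^2 seminorm.  Reflexivity, separability, density,
   pseudomonotonicity, local Lipschitz continuity and the convergence (beyond boundedness) of the
   initial values are not needed for these a priori bounds. *)

lemma ensqrt_le_ennreal:
  assumes "X \<le> ennreal (c\<^sup>2)" "c \<ge> 0"
  shows "ensqrt X \<le> ennreal c"
proof -
  have fin: "X \<noteq> top" using assms(1) by (metis ennreal_neq_top top.extremum_uniqueI)
  then have "enn2real X \<le> c\<^sup>2" using assms(1) by (simp add: enn2real_leI)
  then have "sqrt (enn2real X) \<le> c" using assms(2) by (simp add: real_le_lsqrt)
  then show ?thesis unfolding ensqrt_def using fin by (simp add: ennreal_leI)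
qed

lemma square_add_le:
  fixes x y :: real
  shows "(x + y)\<^sup>2 \<le> 2 * x\<^sup>2 + 2 * y\<^sup>2"
  using sum_squares_bound[of x y] by (simp add: power2_sum)

lemma square_add3_le:
  fixes x y z :: real
  shows "(x + y + z)\<^sup>2 \<le> 3 * x\<^sup>2 + 3 * y\<^sup>2 + 3 * z\<^sup>2"
proof -
  have "0 \<le> (x - y)\<^sup>2" "0 \<le> (y - z)\<^sup>2" "0 \<le> (x - z)\<^sup>2" by simp_all
  then show ?thesis by (auto simp: power2_eq_square algebra_simps)
qed

lemma square_convex_third:
  fixes p q :: real
  shows "(p / 3 + 2 * q / 3)\<^sup>2 \<le> p\<^sup>2 / 3 + 2 * q\<^sup>2 / 3"
proof -
  have "0 \<le> (p - q)\<^sup>2" by simp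
  then show ?thesis by (auto simp: power2_eq_square algebra_simps)
qed

lemma young_mult_le:
  fixes p q \<alpha> :: real
  assumes "\<alpha> > 0"
  shows "p * q \<le> p\<^sup>2 / \<alpha> + \<alpha> / 4 * q\<^sup>2"
proof -
  have "0 \<le> (p - \<alpha> / 2 * q)\<^sup>2" by simp
  then have "\<alpha> * (p * q) \<le> \<alpha> * (p\<^sup>2 / \<alpha> + \<alpha> / 4 * q\<^sup>2)"
    using assms by (simp add: power2_eq_square algebra_simps)
  then show ?thesis using assms by (simp add: mult_le_cancel_left_pos)
qed

lemma norm_add_scaleR_le:
  fixes x y :: "'a::real_normed_vector"
  assumes "\<bar>s\<bar> \<le> 1"
  shows "norm (x + s *\<^sub>R y) \<le> norm x + norm y"
proof -
  have "norm (s *\<^sub>R y) \<le> norm y"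
    using assms by (simp add: mult_left_le_one_le)
  then show ?thesis using norm_triangle_ineq[of x "s *\<^sub>R y"] by linarith
qed

lemma norm_diff_add_le: "norm (x - y + z) \<le> norm x + norm y + norm (z::'a::real_normed_vector)"
  by (metis add_mono norm_triangle_ineq norm_triangle_ineq4 order_trans order_refl)

lemma norm_add_scaleR_eq_sqrt:
  fixes x y :: "'a::real_inner"
  shows "norm (x + s *\<^sub>R y) = sqrt ((norm x)\<^sup>2 + 2 * s * inner x y + s\<^sup>2 * (norm y)\<^sup>2)"
  by (simp add: norm_eq_sqrt_inner inner_add_left inner_add_right inner_commute power2_eq_square
      algebra_simps)

lemma backward_euler_identity:
  fixes x y :: "'a::real_inner"
  shows "2 * inner (x - y) x = (norm x)\<^sup>2 - (norm y)\<^sup>2 + (norm (x - y))\<^sup>2"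
  by (simp add: power2_norm_eq_inner inner_diff_left inner_diff_right inner_commute algebra_simps)

lemma bdf2_identity:
  fixes x y z :: "'a::real_inner"
  shows "4 * inner ((3/2) *\<^sub>R x - 2 *\<^sub>R y + (1/2) *\<^sub>R z) x
    = (norm x)\<^sup>2 + (norm (2 *\<^sub>R x - y))\<^sup>2 - (norm y)\<^sup>2 - (norm (2 *\<^sub>R y - z))\<^sup>2
      + (norm (x - 2 *\<^sub>R y + z))\<^sup>2"
  by (simp add: power2_norm_eq_inner inner_diff_left inner_diff_right inner_add_left inner_add_right
      inner_commute algebra_simps)

lemma sum_shift_pred_le:
  fixes h :: "nat \<Rightarrow> real"
  assumes "\<And>k. h k \<ge> 0"
  shows "(\<Sum>n\<in>{1..N}. h (n - 1)) \<le> (\<Sum>k\<in>{0..N}. h k)"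
proof -
  have "(\<Sum>n\<in>{1..N}. h (n - 1)) = (\<Sum>k<N. h k)"
    by (induction N) (auto simp: atLeastAtMostSuc_conv)
  also have "\<dots> \<le> (\<Sum>k\<in>{0..N}. h k)"
    by (rule sum_mono2) (auto simp: assms)
  finally show ?thesis .
qed

lemma sum_shift_pred2_le:
  fixes h :: "nat \<Rightarrow> real"
  assumes h: "\<And>k. h k \<ge> 0"
  shows "(\<Sum>n\<in>{1..N}. h (n - 2)) \<le> 2 * (\<Sum>k\<in>{0..N}. h k)"
proof -
  have "(\<Sum>n\<in>{1..N}. h (n - 2)) = (\<Sum>n\<in>{1..N}. (\<lambda>k. h (k - 1)) (n - 1))"
    by (simp add: numeral_2_eq_2)
  also have "\<dots> \<le> (\<Sum>k\<in>{0..N}. h (k - 1))"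
    by (rule sum_shift_pred_le) (simp add: h)
  also have "\<dots> = h 0 + (\<Sum>k\<in>{1..N}. h (k - 1))"
    by (simp add: sum.atLeast_Suc_atMost)
  also have "\<dots> \<le> 2 * (\<Sum>k\<in>{0..N}. h k)"
    using sum_shift_pred_le[of h N] member_le_sum[of 0 "{0..N}" h] h by simp
  finally show ?thesis .
qed

lemma discrete_gronwall:
  fixes E :: "nat \<Rightarrow> real"
  assumes q: "0 \<le> q" "q \<le> 1/2" and B: "B \<ge> 0" and E: "\<And>n. E n \<ge> 0"
    and rec: "\<And>m. m \<in> {1..N} \<Longrightarrow> E m \<le> B + q * (\<Sum>n\<in>{1..m}. E n)"
  shows "m \<in> {1..N} \<Longrightarrow> E m \<le> 2 * B * (1 + 2 * q) ^ m"
proof (induction m rule: less_induct)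
  case (less m)
  have m1: "m \<ge> 1" using less.prems by auto
  have geom: "(\<Sum>n\<in>{1..k}. 2 * q * (1 + 2 * q) ^ n) = (1 + 2 * q) ^ Suc k - (1 + 2 * q)" for k
    by (induction k) (auto simp: algebra_simps)
  have "(\<Sum>n\<in>{1..m-1}. E n) \<le> (\<Sum>n\<in>{1..m-1}. 2 * B * (1 + 2 * q) ^ n)"
    by (rule sum_mono) (use less in auto)
  then have "q * (\<Sum>n\<in>{1..m-1}. E n) \<le> q * (\<Sum>n\<in>{1..m-1}. 2 * B * (1 + 2 * q) ^ n)"
    using q(1) by (rule mult_left_mono)
  also have "\<dots> = B * (\<Sum>n\<in>{1..m-1}. 2 * q * (1 + 2 * q) ^ n)"
    by (simp add: sum_distrib_left algebra_simps)
  also have "\<dots> = B * ((1 + 2 * q) ^ m - (1 + 2 * q))"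
    using geom[of "m - 1"] m1 by simp
  finally have past: "q * (\<Sum>n\<in>{1..m-1}. E n) \<le> B * ((1 + 2 * q) ^ m - (1 + 2 * q))" .
  have "(\<Sum>n\<in>{1..m}. E n) = (\<Sum>n\<in>{1..m-1}. E n) + E m"
    using m1 by (cases m) auto
  then have "(1 - q) * E m \<le> B * (1 + 2 * q) ^ m - 2 * q * B"
    using rec[OF less.prems] past by (simp add: algebra_simps)
  moreover have "E m \<le> 2 * ((1 - q) * E m)"
  proof -
    have "(2 * q) * E m \<le> 1 * E m" using q(2) E[of m] by (intro mult_right_mono) auto
    then show ?thesis by (simp add: algebra_simps)
  qed
  moreover have "0 \<le> 2 * q * B" using q(1) B by simp
  ultimately have "E m \<le> 2 * (B * (1 + 2 * q) ^ m)" by linarith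
  then show ?case by (simp add: mult.assoc)
qed

lemma toVs_apply:
  assumes "bounded_linear j"
  shows "blinfun_apply (toVs j v) w = inner (j v) (j w)"
proof -
  have "bounded_linear (\<lambda>w. inner (j v) (j w))"
    using bounded_linear_compose[OF bounded_linear_inner_right assms] by simp
  then show ?thesis unfolding toVs_def by (simp add: bounded_linear_Blinfun_apply)
qed

lemma linear_toVs:
  assumes "bounded_linear j"
  shows "linear (toVs j)"
proof (rule linearI)
  show "toVs j (x + y) = toVs j x + toVs j y" for x y
    by (rule blinfun_eqI)
      (simp add: toVs_apply[OF assms] linear_simps[OF assms] inner_add_left plus_blinfun.rep_eq)
  show "toVs j (c *\<^sub>R x) = c *\<^sub>R toVs j x" for c x
    by (rule blinfun_eqI) (simp add: toVs_apply[OF assms] linear_simps[OF assms] scaleR_blinfun.rep_eq)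
qed

section \<open>Ehrling's inequality\<close>

lemma compact_operator_null_subseq:
  fixes K :: "'v::real_normed_vector \<Rightarrow> 'z::real_normed_vector" and L :: "'z \<Rightarrow> 'h::real_normed_vector"
  assumes K: "compact_operator K" and L: "bounded_linear L" "inj L"
    and w: "\<And>n. norm (w n) \<le> 1" and null: "(\<lambda>n. L (K (w n))) \<longlonglongrightarrow> 0"
  obtains r where "strict_mono r" "(\<lambda>n. K (w (r n))) \<longlonglongrightarrow> 0"
proof -
  have compact: "seq_compact (closure (K ` cball 0 1))"
  proof -
    have "compact (closure (K ` cball 0 1))"
      using K bounded_cball unfolding compact_operator_def by blast
    then show ?thesis by (rule compact_imp_seq_compact)
  qed
  have bounded: "\<forall>n. K (w n) \<in> closure (K ` cball 0 1)"
  proof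
    fix n
    have "w n \<in> cball 0 1" unfolding mem_cball_0 by (rule w)
    then show "K (w n) \<in> closure (K ` cball 0 1)" by (rule subsetD[OF closure_subset imageI])
  qed
  obtain l r where r: "strict_mono r" and lim: "((\<lambda>n. K (w n)) \<circ> r) \<longlonglongrightarrow> l"
    using seq_compactE[OF compact bounded] by metis
  have "(\<lambda>n. L (K (w (r n)))) \<longlonglongrightarrow> L l"
    using bounded_linear.tendsto[OF L(1) lim] by (simp add: o_def)
  moreover have "(\<lambda>n. L (K (w (r n)))) \<longlonglongrightarrow> 0"
    using LIMSEQ_subseq_LIMSEQ[OF null r] by (simp add: o_def)
  ultimately have "L l = 0" by (rule LIMSEQ_unique)
  then have "l = 0" using L linear_simps(3)[OF L(1)] by (metis injD)
  then show ?thesis using that r lim by (simp add: o_def)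
qed

lemma homogeneous_less_normalize:
  fixes K :: "'v::real_normed_vector \<Rightarrow> 'z::real_normed_vector" and L :: "'z \<Rightarrow> 'h::real_normed_vector"
  assumes K: "bounded_linear K" and L: "bounded_linear L"
    and less: "\<epsilon> * norm v + c * norm (L (K v)) < norm (K v)"
  shows "norm ((1 / norm v) *\<^sub>R v) = 1"
    and "\<epsilon> + c * norm (L (K ((1 / norm v) *\<^sub>R v))) < norm (K ((1 / norm v) *\<^sub>R v))"
proof -
  have "v \<noteq> 0"
  proof
    assume "v = 0"
    then show False using less linear_simps(3)[OF K] linear_simps(3)[OF L] by simp
  qed
  then have v: "norm v > 0" by simp
  then show "norm ((1 / norm v) *\<^sub>R v) = 1" by simp
  have Kw: "K ((1 / norm v) *\<^sub>R v) = (1 / norm v) *\<^sub>R K v"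
    by (rule linear_simps(5)[OF K])
  then have "L (K ((1 / norm v) *\<^sub>R v)) = (1 / norm v) *\<^sub>R L (K v)"
    by (simp add: linear_simps(5)[OF L])
  then have norms: "norm (K ((1 / norm v) *\<^sub>R v)) = norm (K v) / norm v"
    "norm (L (K ((1 / norm v) *\<^sub>R v))) = norm (L (K v)) / norm v"
    using Kw by simp_all
  have "(\<epsilon> * norm v + c * norm (L (K v))) / norm v < norm (K v) / norm v"
    using less v by (simp add: divide_strict_right_mono)
  then show "\<epsilon> + c * norm (L (K ((1 / norm v) *\<^sub>R v))) < norm (K ((1 / norm v) *\<^sub>R v))"
    using v unfolding norms by (simp add: add_divide_distrib)
qed

lemma compact_operator_ehrling:
  fixes K :: "'v::real_normed_vector \<Rightarrow> 'z::real_normed_vector" and L :: "'z \<Rightarrow> 'h::real_normed_vector"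
  assumes K: "compact_operator K" and L: "bounded_linear L" "inj L" and \<epsilon>: "\<epsilon> > 0"
  shows "\<exists>C. \<forall>v. norm (K v) \<le> \<epsilon> * norm v + C * norm (L (K v))"
proof (rule ccontr)
  assume "\<not> ?thesis"
  then have "\<forall>n::nat. \<exists>v. \<epsilon> * norm v + real n * norm (L (K v)) < norm (K v)"
    by (metis not_le)
  then obtain v where v: "\<And>n. \<epsilon> * norm (v n) + real n * norm (L (K (v n))) < norm (K (v n))"
    by metis
  have K_lin: "bounded_linear K" using K unfolding compact_operator_def by simp
  define w where "w n = (1 / norm (v n)) *\<^sub>R v n" for n
  have w_norm: "norm (w n) = 1" and w: "\<epsilon> + real n * norm (L (K (w n))) < norm (K (w n))" for n
    unfolding w_def using homogeneous_less_normalize[OF K_lin L(1) v] by blast+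
  obtain M where M: "\<And>x. norm (K x) \<le> norm x * M"
    using bounded_linear.bounded[OF K_lin] by blast
  have bound: "norm (L (K (w n))) \<le> M / real n" if "n > 0" for n
  proof -
    have "real n * norm (L (K (w n))) \<le> M"
      using w[of n] M[of "w n"] \<epsilon> by (simp add: w_norm)
    then show ?thesis using that by (simp add: field_simps)
  qed
  have "eventually (\<lambda>n. norm (L (K (w n))) \<le> M / real n) sequentially"
    using eventually_gt_at_top[of "0::nat"] by (rule eventually_mono) (rule bound)
  moreover have "(\<lambda>n. M / real n) \<longlonglongrightarrow> 0" by (rule lim_const_over_n)
  ultimately have "(\<lambda>n. L (K (w n))) \<longlonglongrightarrow> 0" by (rule Lim_null_comparison)
  then obtain r where null: "(\<lambda>n. K (w (r n))) \<longlonglongrightarrow> 0"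
    using compact_operator_null_subseq[OF K L, of w] w_norm by (metis order_refl)
  have "eventually (\<lambda>n. norm (K (w (r n))) < \<epsilon>) sequentially"
    using tendsto_norm[OF null] \<epsilon> by (simp add: order_tendsto_iff)
  then obtain n where "norm (K (w (r n))) < \<epsilon>" by (meson eventually_sequentially order_refl)
  moreover have "\<epsilon> \<le> norm (K (w (r n)))"
    using w[of "r n"] by (smt (verit) mult_nonneg_nonneg norm_ge_zero of_nat_0_le_iff)
  ultimately show False by simp
qed

lemma compact_operator_ehrling_squared:
  fixes K :: "'v::real_normed_vector \<Rightarrow> 'z::real_normed_vector" and L :: "'z \<Rightarrow> 'h::real_normed_vector"
    and P :: "'z \<Rightarrow> 'u::real_normed_vector"
  assumes K: "compact_operator K" and L: "bounded_linear L" "inj L" and P: "bounded_linear P"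
    and \<delta>: "\<delta> > 0"
  shows "\<exists>C\<ge>0. \<forall>v. (norm (P (K v)))\<^sup>2 \<le> \<delta> * (norm v)\<^sup>2 + C * (norm (L (K v)))\<^sup>2"
proof -
  obtain M where M: "\<And>z. norm (P z) \<le> norm z * M" "M > 0"
    using bounded_linear.pos_bounded[OF P] by blast
  define \<epsilon> where "\<epsilon> = sqrt (\<delta> / 2) / M"
  have "\<epsilon> > 0" unfolding \<epsilon>_def using \<delta> M(2) by simp
  then obtain C where C: "\<And>v. norm (K v) \<le> \<epsilon> * norm v + C * norm (L (K v))"
    using compact_operator_ehrling[OF K L] by blast
  show ?thesis
  proof (intro exI[of _ "2 * M\<^sup>2 * C\<^sup>2"] conjI allI)
    fix v
    have "norm (K v) \<le> \<epsilon> * norm v + \<bar>C\<bar> * norm (L (K v))"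
      using C[of v] by (smt (verit) abs_ge_self mult_right_mono norm_ge_zero)
    then have "norm (P (K v)) \<le> M * (\<epsilon> * norm v + \<bar>C\<bar> * norm (L (K v)))"
      using M by (smt (verit, best) mult.commute mult_left_mono)
    also have "\<dots> = sqrt (\<delta> / 2) * norm v + M * \<bar>C\<bar> * norm (L (K v))"
      unfolding \<epsilon>_def using M(2) by (simp add: algebra_simps)
    finally have "(norm (P (K v)))\<^sup>2 \<le> (sqrt (\<delta> / 2) * norm v + M * \<bar>C\<bar> * norm (L (K v)))\<^sup>2"
      by (simp add: power_mono)
    also have "\<dots> \<le> 2 * (sqrt (\<delta> / 2) * norm v)\<^sup>2 + 2 * (M * \<bar>C\<bar> * norm (L (K v)))\<^sup>2"
      by (rule square_add_le)
    also have "\<dots> = \<delta> * (norm v)\<^sup>2 + 2 * M\<^sup>2 * C\<^sup>2 * (norm (L (K v)))\<^sup>2"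
      using \<delta> by (simp add: power_mult_distrib)
    finally show "(norm (P (K v)))\<^sup>2 \<le> \<delta> * (norm v)\<^sup>2 + 2 * M\<^sup>2 * C\<^sup>2 * (norm (L (K v)))\<^sup>2" .
  qed simp
qed

section \<open>Integrals over the steps of a uniform grid\<close>

lemma measurable_ident_lebesgue_on [measurable]: "(\<lambda>x::real. x) \<in> borel_measurable (lebesgue_on S)"
  by (rule measurable_restrict_space1) (rule measurable_completion, simp add: measurable_lborel2)

lemma pred_le_lebesgue_on [measurable]: "Measurable.pred (lebesgue_on S) (\<lambda>t::real. t \<le> c)"
  by (rule pred_le_const) (rule measurable_ident_lebesgue_on, simp)

lemma measurable_ceiling_divide [measurable]:
  "(\<lambda>t::real. \<lceil>t / \<tau>\<rceil>) \<in> lebesgue_on S \<rightarrow>\<^sub>M count_space UNIV"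
proof -
  have "(\<lambda>t::real. t / \<tau>) \<in> lebesgue_on S \<rightarrow>\<^sub>M borel" by measurable
  then show ?thesis by (rule measurable_compose) (rule measurable_real_ceiling)
qed

lemma AE_lebesgue_on_notin_finite:
  assumes "finite G"
  shows "AE t in lebesgue_on {0..T::real}. t \<notin> G"
proof (rule AE_I')
  have "G \<inter> {0..T} \<in> null_sets lebesgue"
    using assms by (intro null_sets_completionI countable_imp_null_set_lborel countable_finite) auto
  then show "G \<inter> {0..T} \<in> null_sets (lebesgue_on {0..T})"
    by (subst null_sets_restrict_space) auto
qed auto

lemma norm_blinfun_apply_le_young:
  assumes "s > 0"
  shows "norm (blinfun_apply F v) \<le> norm v / (2 * s) * (norm F)\<^sup>2 + norm v * s / 2"
proof -
  have "norm F * 1 \<le> (norm F)\<^sup>2 / (2 * s) + (2 * s) / 4 * 1\<^sup>2"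
    using assms by (intro young_mult_le) simp
  then have "norm F * norm v \<le> ((norm F)\<^sup>2 / (2 * s) + s / 2) * norm v"
    by (intro mult_right_mono) simp_all
  then show ?thesis using norm_blinfun[of F v] by (simp add: algebra_simps)
qed

text \<open>The bound equals \<open>\<parallel>v\<parallel> sqrt ((y - x) (F + (y - x)))\<close>.  It comes from Young's inequality
  with the weight \<open>s\<close> that balances the two integrated terms; the summand \<open>y - x\<close> only keeps \<open>s\<close>
  positive.\<close>
lemma abs_integral_blinfun_apply_le:
  fixes f :: "real \<Rightarrow> ('v::real_normed_vector \<Rightarrow>\<^sub>L real)"
  assumes f: "f \<in> borel_measurable (lebesgue_on {x..y})" and xy: "x < y"
    and F: "(\<integral>\<^sup>+ t. ennreal ((norm (f t))\<^sup>2) \<partial>lebesgue_on {x..y}) = ennreal F" "F \<ge> 0"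
  shows "\<bar>\<integral>t. blinfun_apply (f t) v \<partial>lebesgue_on {x..y}\<bar>
    \<le> norm v * ((y - x) * sqrt ((F + (y - x)) / (y - x)))"
proof -
  define M where "M = lebesgue_on {x..y}"
  define l where "l = y - x"
  define s where "s = sqrt ((F + l) / l)"
  define a where "a = norm v / (2 * s)"
  define b where "b = norm v * s / 2"
  have l: "l > 0" using xy l_def by simp
  have s: "s > 0" "F \<le> s\<^sup>2 * l" unfolding s_def using l F(2) by simp_all
  have ab: "a \<ge> 0" "b \<ge> 0" unfolding a_def b_def using s by simp_all
  have "ennreal \<bar>\<integral>t. blinfun_apply (f t) v \<partial>M\<bar> \<le> (\<integral>\<^sup>+ t. ennreal (norm (blinfun_apply (f t) v)) \<partial>M)"
  proof (cases "integrable M (\<lambda>t. blinfun_apply (f t) v)")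
    case True
    then show ?thesis using integral_norm_bound_ennreal[OF True] by simp
  qed (simp add: not_integrable_integral_eq)
  also have "\<dots> \<le> (\<integral>\<^sup>+ t. ennreal a * ennreal ((norm (f t))\<^sup>2) + ennreal b \<partial>M)"
  proof (rule nn_integral_mono)
    fix t
    have "norm (blinfun_apply (f t) v) \<le> a * (norm (f t))\<^sup>2 + b"
      using norm_blinfun_apply_le_young[OF s(1)] unfolding a_def b_def .
    then have "ennreal (norm (blinfun_apply (f t) v)) \<le> ennreal (a * (norm (f t))\<^sup>2 + b)"
      by (rule ennreal_leI)
    also have "\<dots> = ennreal a * ennreal ((norm (f t))\<^sup>2) + ennreal b"
      using ab ennreal_plus[of "a * (norm (f t))\<^sup>2" b] by (simp add: ennreal_mult)
    finally show "ennreal (norm (blinfun_apply (f t) v)) \<le> ennreal a * ennreal ((norm (f t))\<^sup>2) + ennreal b" .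
  qed
  also have "\<dots> = ennreal a * ennreal F + ennreal b * ennreal l"
  proof -
    have "emeasure M (space M) = ennreal l"
      unfolding M_def l_def using xy by (simp add: emeasure_restrict_space)
    moreover have "(\<lambda>t. ennreal ((norm (f t))\<^sup>2)) \<in> borel_measurable M"
      using f unfolding M_def by measurable
    ultimately show ?thesis
      using F(1) unfolding M_def[symmetric] by (simp add: nn_integral_add nn_integral_cmult)
  qed
  also have "\<dots> = ennreal (a * F + b * l)"
    using ab l F(2) by (simp add: ennreal_mult'[symmetric])
  also have "\<dots> \<le> ennreal (norm v * (l * s))"
  proof (rule ennreal_leI)
    have "F / (2 * s) \<le> s * l / 2" using s by (simp add: field_simps power2_eq_square)
    then have "norm v * (F / (2 * s)) \<le> norm v * (s * l / 2)" by (rule mult_left_mono) simp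
    then show "a * F + b * l \<le> norm v * (l * s)" unfolding a_def b_def by (simp add: algebra_simps)
  qed
  finally show ?thesis
    using l s(1) unfolding M_def l_def s_def by (simp add: ennreal_le_iff)
qed

definition step_L2_sq :: "real \<Rightarrow> (real \<Rightarrow> 'a::real_normed_vector) \<Rightarrow> real \<Rightarrow> nat \<Rightarrow> real" where
  "step_L2_sq T f \<tau> k = enn2real (\<integral>\<^sup>+ t. ennreal ((norm (f t))\<^sup>2
      * indicator ({(real k - 1) * \<tau> .. real k * \<tau>} \<inter> {0..T}) t) \<partial>lebesgue_on {0..T})"

lemma step_L2_sq_nonneg: "step_L2_sq T f \<tau> k \<ge> 0"
  by (simp add: step_L2_sq_def)

lemma nn_integral_sq_indicator_le:
  assumes "(\<integral>\<^sup>+ t. ennreal ((norm (f t))\<^sup>2) \<partial>M) = ennreal \<Phi>"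
  shows "(\<integral>\<^sup>+ t. ennreal ((norm (f t))\<^sup>2 * indicator S t) \<partial>M) \<le> ennreal \<Phi>"
proof -
  have "(\<integral>\<^sup>+ t. ennreal ((norm (f t))\<^sup>2 * indicator S t) \<partial>M) \<le> (\<integral>\<^sup>+ t. ennreal ((norm (f t))\<^sup>2) \<partial>M)"
    by (rule nn_integral_mono) (simp add: indicator_def)
  then show ?thesis using assms by simp
qed

lemma step_L2_sq_eq:
  fixes f :: "real \<Rightarrow> 'a::real_normed_vector"
  assumes \<Phi>: "(\<integral>\<^sup>+ t. ennreal ((norm (f t))\<^sup>2) \<partial>lebesgue_on {0..T}) = ennreal \<Phi>"
    and k: "k \<ge> 1" "real k * \<tau> \<le> T" and \<tau>: "\<tau> > 0"
  shows "(\<integral>\<^sup>+ t. ennreal ((norm (f t))\<^sup>2) \<partial>lebesgue_on {(real k - 1) * \<tau> .. real k * \<tau>})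
    = ennreal (step_L2_sq T f \<tau> k)"
proof -
  define S where "S = {(real k - 1) * \<tau> .. real k * \<tau>}"
  have SS: "S \<inter> {0..T} = S" "{0..T} \<inter> S = S" unfolding S_def using k \<tau> by auto
  have "restrict_space (lebesgue_on {0..T}) S = restrict_space lebesgue ({0..T} \<inter> S)"
    by (rule restrict_restrict_space) (auto simp: S_def)
  then have "lebesgue_on S = restrict_space (lebesgue_on {0..T}) S"
    by (simp only: SS(2))
  then have "(\<integral>\<^sup>+ t. ennreal ((norm (f t))\<^sup>2) \<partial>lebesgue_on S)
      = (\<integral>\<^sup>+ t. ennreal ((norm (f t))\<^sup>2) * indicator S t \<partial>lebesgue_on {0..T})"
    by (simp only:) (rule nn_integral_restrict_space, simp add: S_def SS sets_restrict_space_iff)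
  also have "\<dots> = (\<integral>\<^sup>+ t. ennreal ((norm (f t))\<^sup>2 * indicator (S \<inter> {0..T}) t) \<partial>lebesgue_on {0..T})"
    unfolding SS(1) by (intro nn_integral_cong) (simp split: split_indicator)
  finally have eq: "(\<integral>\<^sup>+ t. ennreal ((norm (f t))\<^sup>2) \<partial>lebesgue_on S)
      = (\<integral>\<^sup>+ t. ennreal ((norm (f t))\<^sup>2 * indicator (S \<inter> {0..T}) t) \<partial>lebesgue_on {0..T})" .
  have "(\<integral>\<^sup>+ t. ennreal ((norm (f t))\<^sup>2 * indicator (S \<inter> {0..T}) t) \<partial>lebesgue_on {0..T}) \<noteq> top"
    using nn_integral_sq_indicator_le[OF \<Phi>] by (metis ennreal_neq_top neq_top_trans)
  then show ?thesis using eq unfolding step_L2_sq_def S_def by (simp add: less_top)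
qed

lemma sum_indicator_steps_le_2:
  assumes \<tau>: "\<tau> > 0"
  shows "(\<Sum>k\<in>{0..N}. indicator ({(real k - 1) * \<tau> .. real k * \<tau>} \<inter> {0..T}) t) \<le> (2::real)"
proof -
  define K where "K = {0..N} \<inter> {k. t \<in> {(real k - 1) * \<tau> .. real k * \<tau>} \<inter> {0..T}}"
  define c where "c = nat \<lceil>t / \<tau>\<rceil>"
  have "K \<subseteq> {c, Suc c}"
  proof
    fix k assume "k \<in> K"
    then have t: "t \<ge> 0" "(real k - 1) * \<tau> \<le> t" "t \<le> real k * \<tau>" unfolding K_def by auto
    then have "t / \<tau> \<le> real k" "real k \<le> t / \<tau> + 1" "t / \<tau> \<ge> 0"
      using \<tau> by (simp_all add: field_simps)
    then have "\<lceil>t / \<tau>\<rceil> \<le> int k" "int k \<le> \<lceil>t / \<tau>\<rceil> + 1" "\<lceil>t / \<tau>\<rceil> \<ge> 0"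
      using le_of_int_ceiling[of "t / \<tau>"] by (simp_all add: ceiling_le_iff) linarith
    then show "k \<in> {c, Suc c}" unfolding c_def by auto
  qed
  then have "card K \<le> 2"
    using card_mono[of "{c, Suc c}" K] card_insert_le_m1[of 1 "{Suc c}" c] by auto
  moreover have "(\<Sum>k\<in>{0..N}. indicator ({(real k - 1) * \<tau> .. real k * \<tau>} \<inter> {0..T}) t) = real (card K)"
    unfolding K_def by (simp add: indicator_def sum.If_cases)
  ultimately show ?thesis by simp
qed

lemma sum_step_L2_sq_le:
  fixes f :: "real \<Rightarrow> 'a::real_normed_vector"
  assumes f: "f \<in> borel_measurable (lebesgue_on {0..T})"
    and \<Phi>: "(\<integral>\<^sup>+ t. ennreal ((norm (f t))\<^sup>2) \<partial>lebesgue_on {0..T}) = ennreal \<Phi>" "\<Phi> \<ge> 0"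
    and \<tau>: "\<tau> > 0"
  shows "(\<Sum>k\<in>{0..N}. step_L2_sq T f \<tau> k) \<le> 2 * \<Phi>"
proof -
  let ?I = "\<lambda>k. {(real k - 1) * \<tau> .. real k * \<tau>} \<inter> {0..T}"
  have fin: "(\<integral>\<^sup>+ t. ennreal ((norm (f t))\<^sup>2 * indicator (?I k) t) \<partial>lebesgue_on {0..T}) \<noteq> top" for k
    using nn_integral_sq_indicator_le[OF \<Phi>(1)] by (metis ennreal_neq_top neq_top_trans)
  have "ennreal (\<Sum>k\<in>{0..N}. step_L2_sq T f \<tau> k) = (\<Sum>k\<in>{0..N}. ennreal (step_L2_sq T f \<tau> k))"
    by (rule sum_ennreal[symmetric]) (simp add: step_L2_sq_nonneg)
  also have "\<dots> = (\<Sum>k\<in>{0..N}. (\<integral>\<^sup>+ t. ennreal ((norm (f t))\<^sup>2 * indicator (?I k) t) \<partial>lebesgue_on {0..T}))"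
    unfolding step_L2_sq_def using fin by (simp add: less_top)
  also have "\<dots> = (\<integral>\<^sup>+ t. (\<Sum>k\<in>{0..N}. ennreal ((norm (f t))\<^sup>2 * indicator (?I k) t)) \<partial>lebesgue_on {0..T})"
    by (rule nn_integral_sum[symmetric]) (use f in measurable)
  also have "\<dots> \<le> (\<integral>\<^sup>+ t. ennreal (2 * (norm (f t))\<^sup>2) \<partial>lebesgue_on {0..T})"
  proof (rule nn_integral_mono)
    fix t
    have "(\<Sum>k\<in>{0..N}. ennreal ((norm (f t))\<^sup>2 * indicator (?I k) t))
        = ennreal ((norm (f t))\<^sup>2 * (\<Sum>k\<in>{0..N}. indicator (?I k) t))"
      by (simp add: sum_ennreal sum_distrib_left)
    also have "\<dots> \<le> ennreal ((norm (f t))\<^sup>2 * 2)"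
      using sum_indicator_steps_le_2[OF \<tau>, where N=N and T=T and t=t]
      by (intro ennreal_leI mult_left_mono) auto
    finally show "(\<Sum>k\<in>{0..N}. ennreal ((norm (f t))\<^sup>2 * indicator (?I k) t)) \<le> ennreal (2 * (norm (f t))\<^sup>2)"
      by (simp add: mult.commute)
  qed
  also have "\<dots> = 2 * ennreal \<Phi>"
    using f \<Phi>(1) by (simp add: ennreal_mult nn_integral_cmult)
  also have "\<dots> = ennreal (2 * \<Phi>)" using \<Phi>(2) by (simp add: ennreal_mult)
  finally show ?thesis using \<Phi>(2) by (simp add: ennreal_le_iff)
qed

lemma nn_integral_step_function_le:
  fixes h :: "real \<Rightarrow> real" and c :: "nat \<Rightarrow> real"
  assumes \<tau>: "\<tau> > 0" and NT: "real N * \<tau> = T" and G: "finite G" and c: "\<And>n. c n \<ge> 0"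
    and h: "\<And>t. t \<in> {0..T} \<Longrightarrow> t \<notin> G \<Longrightarrow>
      \<exists>n\<in>{1..N}. t \<in> {(real n - 1) * \<tau> .. real n * \<tau>} \<and> h t \<le> c n"
  shows "(\<integral>\<^sup>+ t. ennreal (h t) \<partial>lebesgue_on {0..T}) \<le> ennreal (\<tau> * (\<Sum>n\<in>{1..N}. c n))"
proof -
  let ?J = "\<lambda>n. {(real n - 1) * \<tau> .. real n * \<tau>}"
  let ?L = "lebesgue_on {0..T}"
  have "(\<integral>\<^sup>+ t. ennreal (h t) \<partial>?L) \<le> (\<integral>\<^sup>+ t. (\<Sum>n\<in>{1..N}. ennreal (c n) * indicator (?J n) t) \<partial>?L)"
  proof (rule nn_integral_mono_AE)
    show "AE t in ?L. ennreal (h t) \<le> (\<Sum>n\<in>{1..N}. ennreal (c n) * indicator (?J n) t)"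
      using AE_lebesgue_on_notin_finite[OF G, of T] AE_space[of ?L]
    proof eventually_elim
      case (elim t)
      then have "t \<in> {0..T}" "t \<notin> G" by auto
      then obtain n where n: "n \<in> {1..N}" "t \<in> ?J n" "h t \<le> c n" using h by blast
      then have "ennreal (h t) \<le> ennreal (c n) * indicator (?J n) t" by (simp add: ennreal_leI)
      also have "\<dots> \<le> (\<Sum>n\<in>{1..N}. ennreal (c n) * indicator (?J n) t)"
        using n(1) by (rule member_le_sum) auto
      finally show ?case .
    qed
  qed
  also have "\<dots> = (\<Sum>n\<in>{1..N}. (\<integral>\<^sup>+ t. ennreal (c n) * indicator (?J n) t \<partial>?L))"
    by (rule nn_integral_sum) measurable
  also have "\<dots> = (\<Sum>n\<in>{1..N}. ennreal (c n) * ennreal \<tau>)"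
  proof (rule sum.cong)
    fix n assume n: "n \<in> {1..N}"
    have "real n * \<tau> \<le> real N * \<tau>" using n \<tau> by (intro mult_right_mono) auto
    then have sub: "?J n \<subseteq> {0..T}" using n \<tau> NT by auto
    then have "?J n \<in> sets ?L" by (subst sets_restrict_space_iff) auto
    moreover have "emeasure ?L (?J n) = ennreal \<tau>"
      using sub \<tau> by (subst emeasure_restrict_space) (auto simp: algebra_simps)
    ultimately show "(\<integral>\<^sup>+ t. ennreal (c n) * indicator (?J n) t \<partial>?L) = ennreal (c n) * ennreal \<tau>"
      by (simp add: nn_integral_cmult_indicator)
  qed simp
  also have "\<dots> = ennreal (\<tau> * (\<Sum>n\<in>{1..N}. c n))"
    using c \<tau> by (simp add: ennreal_mult[symmetric] sum_distrib_left mult.commute)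
  finally show ?thesis .
qed

section \<open>A priori estimates for one step size\<close>

text \<open>The step size is \<open>\<tau> = T/N\<close>.  \<open>Ki\<close> bounds \<open>\<iota>\<close>, and \<open>Ce\<close> is the constant of Ehrling's
  inequality for the weight \<open>\<alpha>/(6d)\<close>, chosen so that a quarter of the coercivity absorbs the
  growth of \<open>\<partial>J\<close>; \<open>\<Phi>\<close> is the square of the norm of \<open>f\<close> in \<open>L\<^sup>2(0,T;V\<^sup>*)\<close>, and the
  last assumption is the smallness condition on \<open>\<tau>\<close>.\<close>

locale bdf2_scheme =
  fixes j :: "'v::real_normed_vector \<Rightarrow> 'h::real_inner"
    and A :: "'v \<Rightarrow> ('v \<Rightarrow>\<^sub>L real)" and iota :: "'v \<Rightarrow> 'u::real_normed_vector"
    and J :: "'u \<Rightarrow> real"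
    and f :: "real \<Rightarrow> ('v \<Rightarrow>\<^sub>L real)" and T :: real and N :: nat
    and u :: "nat \<Rightarrow> 'v" and xi :: "nat \<Rightarrow> ('u \<Rightarrow>\<^sub>L real)"
    and \<alpha> \<beta> d a b Ki Ce \<Phi> M0 c0 :: real
  assumes j_lin: "bounded_linear j"
    and Ki: "\<And>v. norm (iota v) \<le> Ki * norm v" "Ki \<ge> 0"
    and Ce: "\<And>v. (norm (iota v))\<^sup>2 \<le> \<alpha> / (6 * d) * (norm v)\<^sup>2 + Ce * (norm (j v))\<^sup>2" "Ce \<ge> 0"
    and A_growth: "\<And>v. norm (A v) \<le> a + b * norm v" "a \<ge> 0" "b > 0"
    and A_coerc: "\<And>v. blinfun_apply (A v) v \<ge> \<alpha> * (norm v)\<^sup>2 - \<beta> * (norm (j v))\<^sup>2" "\<alpha> > 0" "\<beta> \<ge> 0"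
    and J_growth: "\<And>w \<xi>. \<xi> \<in> clarke_subdiff J w \<Longrightarrow> norm \<xi> \<le> d * (1 + norm w)" "d > 0"
    and T_pos: "T > 0" and N_pos: "N \<ge> 1"
    and f_meas: "f \<in> borel_measurable (lebesgue_on {0..T})"
    and f_L2: "(\<integral>\<^sup>+ t. ennreal ((norm (f t))\<^sup>2) \<partial>lebesgue_on {0..T}) = ennreal \<Phi>" "\<Phi> \<ge> 0"
    and sol: "rothe_solution j A iota J f T N u xi"
    and init_H: "norm (j (u 0)) \<le> M0"
    and init_V: "(T / real N) * (norm (u 0))\<^sup>2 \<le> c0\<^sup>2"
    and small: "(T / real N) * (\<beta> + 3 * d * Ce / 2) \<le> 1/8"
begin

definition "\<tau> = T / real N"

definition "dq n = (if n = 1 then (1/\<tau>) *\<^sub>R (u 1 - u 0)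
     else (1/\<tau>) *\<^sub>R ((3/2) *\<^sub>R u n - 2 *\<^sub>R u (n - 1) + (1/2) *\<^sub>R u (n - 2)))"

definition "\<beta>' = \<beta> + 3 * d * Ce / 2"

text \<open>\<open>\<tau> * f_loc k\<close> bounds the \<open>L\<^sup>1\<close> norm of \<open>f\<close> on the \<open>k\<close>-th step and \<open>f_dual n\<close> the norm
  of \<open>f\<^sub>\<tau>\<^sup>n\<close> in \<open>V\<^sup>*\<close>.\<close>
definition "f_loc k = sqrt ((step_L2_sq T f \<tau> k + \<tau>) / \<tau>)"
definition "f_dual n = (3/2) * f_loc n + (1/2) * f_loc (n - 1)"
definition "rhs n = (f_dual n)\<^sup>2 / \<alpha> + d / 2"

lemma tau_pos: "\<tau> > 0" unfolding \<tau>_def using T_pos N_pos by simp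
lemma N_tau: "real N * \<tau> = T" unfolding \<tau>_def using N_pos by simp
lemma tau_le_T: "\<tau> \<le> T"
  using N_tau N_pos tau_pos mult_right_mono[of 1 "real N" \<tau>] by simp
lemma beta'_nonneg: "\<beta>' \<ge> 0" unfolding \<beta>'_def using A_coerc J_growth Ce by simp
lemma tau_beta'_le: "\<tau> * \<beta>' \<le> 1/8" using small unfolding \<tau>_def \<beta>'_def .
lemma f_loc_nonneg: "f_loc k \<ge> 0"
  unfolding f_loc_def using tau_pos step_L2_sq_nonneg[of T f \<tau> k] by simp
lemma tau_f_loc_sq: "\<tau> * (f_loc k)\<^sup>2 = step_L2_sq T f \<tau> k + \<tau>"
  unfolding f_loc_def using tau_pos step_L2_sq_nonneg[of T f \<tau> k] by simp
lemma f_dual_nonneg: "f_dual n \<ge> 0" unfolding f_dual_def using f_loc_nonneg by (simp add: add_nonneg_nonneg)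
lemma rhs_nonneg: "rhs n \<ge> 0" unfolding rhs_def using A_coerc J_growth by simp

lemma tau_dq_1: "\<tau> *\<^sub>R dq 1 = u 1 - u 0"
  unfolding dq_def using tau_pos by simp

lemma tau_dq: "n \<ge> 2 \<Longrightarrow> \<tau> *\<^sub>R dq n = (3/2) *\<^sub>R u n - 2 *\<^sub>R u (n - 1) + (1/2) *\<^sub>R u (n - 2)"
  unfolding dq_def using tau_pos by simp

lemma scheme:
  assumes n: "n \<in> {1..N}"
  shows scheme_eq: "inner (j (dq n)) (j v) + blinfun_apply (A (u n)) v + blinfun_apply (xi n) (iota v)
      = ftau T f N n v"
    and scheme_subdiff: "xi n \<in> clarke_subdiff J (iota (u n))"
proof -
  have sc: "inner (j ((1/\<tau>) *\<^sub>R x)) (j v) = inner (j x) (j v) / \<tau>" for x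
    using linear_simps(5)[OF j_lin] by (simp add: divide_inverse mult.commute)
  note S = sol[unfolded rothe_solution_def Let_def \<tau>_def[symmetric]]
  consider "n = 1" | "n \<in> {2..N}" using n by fastforce
  then show "inner (j (dq n)) (j v) + blinfun_apply (A (u n)) v + blinfun_apply (xi n) (iota v)
      = ftau T f N n v" and "xi n \<in> clarke_subdiff J (iota (u n))"
    by (cases; use S in \<open>auto simp: dq_def sc\<close>)+
qed

lemma norm_xi_le:
  assumes n: "n \<in> {1..N}"
  shows "norm (xi n) \<le> d * (1 + Ki * norm (u n))"
proof -
  have "norm (xi n) \<le> d * (1 + norm (iota (u n)))" using J_growth scheme_subdiff[OF n] by blast
  also have "\<dots> \<le> d * (1 + Ki * norm (u n))" using Ki(1)[of "u n"] J_growth(2) by simp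
  finally show ?thesis .
qed

lemma abs_integral_step_le:
  assumes k: "k \<in> {1..N}"
  shows "\<bar>\<integral>t. blinfun_apply (f t) v \<partial>lebesgue_on {(real k - 1) * \<tau> .. real k * \<tau>}\<bar>
    \<le> norm v * (\<tau> * f_loc k)"
proof -
  have kT: "real k * \<tau> \<le> T"
    using k N_tau tau_pos by (metis atLeastAtMost_iff mult_right_mono of_nat_le_iff less_imp_le)
  have "{(real k - 1) * \<tau> .. real k * \<tau>} \<subseteq> {0..T}" using k kT tau_pos by auto
  then have "f \<in> borel_measurable (lebesgue_on {(real k - 1) * \<tau> .. real k * \<tau>})"
    by (rule measurable_restrict_mono[OF f_meas])
  from abs_integral_blinfun_apply_le[OF this _ step_L2_sq_eq[OF f_L2(1)] step_L2_sq_nonneg, of v]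
  show ?thesis using k kT tau_pos unfolding f_loc_def by (simp add: algebra_simps)
qed

lemma abs_ftau_le:
  assumes n: "n \<in> {1..N}"
  shows "\<bar>ftau T f N n v\<bar> \<le> f_dual n * norm v"
proof (cases "n = 1")
  case True
  have "ftau T f N n v = (1 / \<tau>) * (\<integral>t. blinfun_apply (f t) v \<partial>lebesgue_on {(real 1 - 1) * \<tau> .. real 1 * \<tau>})"
    unfolding ftau_def Let_def \<tau>_def[symmetric] using True by simp
  also have "\<bar>\<dots>\<bar> \<le> f_loc 1 * norm v"
    using abs_integral_step_le[of 1 v] N_pos tau_pos by (simp add: abs_mult field_simps)
  also have "\<dots> \<le> f_dual n * norm v"
    unfolding f_dual_def True using f_loc_nonneg[of 0] f_loc_nonneg[of 1] by (intro mult_right_mono) auto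
  finally show ?thesis .
next
  case False
  then have n2: "n \<ge> 2" using n by auto
  have prev: "{(real n - 2) * \<tau> .. (real n - 1) * \<tau>} = {(real (n - 1) - 1) * \<tau> .. real (n - 1) * \<tau>}"
    using n2 by (simp add: of_nat_diff algebra_simps)
  define I1 where "I1 = (\<integral>t. blinfun_apply (f t) v \<partial>lebesgue_on {(real n - 1) * \<tau> .. real n * \<tau>})"
  define I2 where "I2 = (\<integral>t. blinfun_apply (f t) v \<partial>lebesgue_on {(real (n - 1) - 1) * \<tau> .. real (n - 1) * \<tau>})"
  have "ftau T f N n v = (3 / (2 * \<tau>)) * I1 - (1 / (2 * \<tau>)) * I2"
    unfolding ftau_def Let_def \<tau>_def[symmetric] I1_def I2_def prev[symmetric] using False by simp
  also have "\<bar>\<dots>\<bar> \<le> \<bar>(3 / (2 * \<tau>)) * I1\<bar> + \<bar>(1 / (2 * \<tau>)) * I2\<bar>"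
    by (rule abs_triangle_ineq4)
  also have "\<dots> = (3 / (2 * \<tau>)) * \<bar>I1\<bar> + (1 / (2 * \<tau>)) * \<bar>I2\<bar>"
    using tau_pos by (simp add: abs_mult)
  also have "\<dots> \<le> (3 / (2 * \<tau>)) * (norm v * (\<tau> * f_loc n)) + (1 / (2 * \<tau>)) * (norm v * (\<tau> * f_loc (n - 1)))"
  proof -
    have "\<bar>I1\<bar> \<le> norm v * (\<tau> * f_loc n)" unfolding I1_def by (rule abs_integral_step_le[OF n])
    moreover have "\<bar>I2\<bar> \<le> norm v * (\<tau> * f_loc (n - 1))"
      unfolding I2_def by (rule abs_integral_step_le) (use n n2 in auto)
    ultimately show ?thesis using tau_pos by (intro add_mono mult_left_mono) auto
  qed
  also have "\<dots> = f_dual n * norm v" unfolding f_dual_def using tau_pos by (simp add: field_simps)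
  finally show ?thesis .
qed

lemma sum_f_dual_sq_le: "\<tau> * (\<Sum>n\<in>{1..N}. (f_dual n)\<^sup>2) \<le> 20 * \<Phi> + 20 * T"
proof -
  define h where "h k = step_L2_sq T f \<tau> k + \<tau>" for k
  have h: "h k \<ge> 0" for k unfolding h_def using step_L2_sq_nonneg[of T f \<tau> k] tau_pos by simp
  have "\<tau> * (f_dual n)\<^sup>2 \<le> 5 * h n + 5 * h (n - 1)" for n
  proof -
    have "(f_dual n)\<^sup>2 \<le> 2 * ((3/2) * f_loc n)\<^sup>2 + 2 * ((1/2) * f_loc (n - 1))\<^sup>2"
      unfolding f_dual_def by (rule square_add_le)
    also have "\<dots> = 9/2 * (f_loc n)\<^sup>2 + 1/2 * (f_loc (n - 1))\<^sup>2"
      by (simp add: power_mult_distrib power_divide)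
    also have "\<dots> \<le> 5 * (f_loc n)\<^sup>2 + 5 * (f_loc (n - 1))\<^sup>2"
      using zero_le_power2[of "f_loc n"] zero_le_power2[of "f_loc (n - 1)"] by linarith
    finally have "\<tau> * (f_dual n)\<^sup>2 \<le> \<tau> * (5 * (f_loc n)\<^sup>2 + 5 * (f_loc (n - 1))\<^sup>2)"
      by (rule mult_left_mono) (use tau_pos in simp)
    then show ?thesis unfolding h_def tau_f_loc_sq[symmetric] by (simp add: algebra_simps)
  qed
  then have "\<tau> * (\<Sum>n\<in>{1..N}. (f_dual n)\<^sup>2) \<le> 5 * (\<Sum>n\<in>{1..N}. h n) + 5 * (\<Sum>n\<in>{1..N}. h (n - 1))"
    by (simp add: sum_distrib_left sum.distrib[symmetric] sum_mono)
  also have "\<dots> \<le> 10 * (\<Sum>k\<in>{0..N}. h k)"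
    using sum_mono2[of "{0..N}" "{1..N}" h] sum_shift_pred_le[of h N] h by simp
  also have "(\<Sum>k\<in>{0..N}. h k) = (\<Sum>k\<in>{0..N}. step_L2_sq T f \<tau> k) + real (Suc N) * \<tau>"
    unfolding h_def by (simp add: sum.distrib)
  also have "\<dots> \<le> 2 * \<Phi> + 2 * T"
    using sum_step_L2_sq_le[OF f_meas f_L2 tau_pos, of N] N_tau tau_le_T
    by (simp add: distrib_right)
  finally show ?thesis by simp
qed

subsection \<open>Energy estimate\<close>

definition "uH k = j (u k)"
definition "energy k = (norm (uH k))\<^sup>2 + (norm (2 *\<^sub>R uH k - uH (k - 1)))\<^sup>2"

lemma energy_nonneg: "energy k \<ge> 0" unfolding energy_def by simp

lemma M0_nonneg: "M0 \<ge> 0" using init_H norm_ge_zero order_trans by blast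

lemma norm_uH_0_sq: "(norm (uH 0))\<^sup>2 \<le> M0\<^sup>2"
  using init_H unfolding uH_def by (simp add: power_mono)

lemma tested_scheme_le:
  assumes n: "n \<in> {1..N}"
  shows "inner (j (dq n)) (uH n) + \<alpha> / 2 * (norm (u n))\<^sup>2 \<le> rhs n + \<beta>' * (norm (uH n))\<^sup>2"
proof -
  define x where "x = u n"
  define ni where "ni = norm (iota x)"
  have eq: "inner (j (dq n)) (j x) = ftau T f N n x - blinfun_apply (A x) x - blinfun_apply (xi n) (iota x)"
    using scheme_eq[OF n, of x] unfolding x_def by linarith
  have f: "ftau T f N n x \<le> (f_dual n)\<^sup>2 / \<alpha> + \<alpha> / 4 * (norm x)\<^sup>2"
    using abs_ftau_le[OF n, of x] young_mult_le[OF A_coerc(2), of "f_dual n" "norm x"] by linarith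
  have "- blinfun_apply (xi n) (iota x) \<le> norm (xi n) * ni"
    using norm_blinfun[of "xi n" "iota x"] unfolding ni_def by simp
  also have "\<dots> \<le> d * (1 + ni) * ni"
    using J_growth(1)[OF scheme_subdiff[OF n]] unfolding ni_def x_def by (simp add: mult_right_mono)
  also have "\<dots> \<le> d / 2 + 3 * d / 2 * ni\<^sup>2"
  proof -
    have "ni \<le> 1/2 + ni\<^sup>2 / 2" using sum_squares_bound[of ni 1] by simp
    then have "d * ni \<le> d * (1/2 + ni\<^sup>2 / 2)" using J_growth(2) by (simp add: mult_left_mono)
    then show ?thesis by (simp add: algebra_simps power2_eq_square)
  qed
  also have "3 * d / 2 * ni\<^sup>2 \<le> \<alpha> / 4 * (norm x)\<^sup>2 + 3 * d * Ce / 2 * (norm (j x))\<^sup>2"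
  proof -
    have "3 * d / 2 * ni\<^sup>2 \<le> 3 * d / 2 * (\<alpha> / (6 * d) * (norm x)\<^sup>2 + Ce * (norm (j x))\<^sup>2)"
      using Ce(1)[of x] J_growth(2) unfolding ni_def by (simp add: mult_left_mono)
    also have "\<dots> = \<alpha> / 4 * (norm x)\<^sup>2 + 3 * d * Ce / 2 * (norm (j x))\<^sup>2"
      using J_growth(2) by (simp add: field_simps)
    finally show ?thesis .
  qed
  finally have "inner (j (dq n)) (j x) \<le> rhs n - \<alpha> / 2 * (norm x)\<^sup>2 + \<beta>' * (norm (j x))\<^sup>2"
    using eq f A_coerc(1)[of x] unfolding rhs_def \<beta>'_def by (simp add: algebra_simps)
  then show ?thesis unfolding x_def uH_def by simp
qed

lemma inner_j_tau_dq: "\<tau> * inner (j (dq n)) y = inner (j (\<tau> *\<^sub>R dq n)) y"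
  using linear_simps(5)[OF j_lin] by simp

lemma first_step_le:
  "(norm (uH 1))\<^sup>2 + \<alpha> * \<tau> * (norm (u 1))\<^sup>2 \<le> 2 * M0\<^sup>2 + 4 * \<tau> * rhs 1"
proof -
  define X where "X = (norm (uH 1))\<^sup>2"
  define W where "W = \<alpha> * \<tau> * (norm (u 1))\<^sup>2"
  define Z where "Z = \<tau> * rhs 1"
  have "2 * \<tau> * inner (j (dq 1)) (uH 1) = 2 * inner (uH 1 - uH 0) (uH 1)"
    using inner_j_tau_dq[of 1 "uH 1"] tau_dq_1 unfolding uH_def by (simp add: linear_simps(2)[OF j_lin])
  also have "\<dots> \<ge> X - (norm (uH 0))\<^sup>2"
    unfolding backward_euler_identity X_def by simp
  finally have "X - (norm (uH 0))\<^sup>2 + W \<le> 2 * \<tau> * (inner (j (dq 1)) (uH 1) + \<alpha> / 2 * (norm (u 1))\<^sup>2)"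
    unfolding W_def by (simp add: algebra_simps)
  also have "\<dots> \<le> 2 * \<tau> * (rhs 1 + \<beta>' * X)"
    using tested_scheme_le[of 1] N_pos tau_pos unfolding X_def by (intro mult_left_mono) auto
  also have "\<dots> = 2 * Z + 2 * ((\<tau> * \<beta>') * X)"
    unfolding Z_def by (simp add: algebra_simps)
  finally have "X - (norm (uH 0))\<^sup>2 + W \<le> 2 * Z + 2 * ((\<tau> * \<beta>') * X)" .
  moreover have "(\<tau> * \<beta>') * X \<le> (1/8) * X"
    using tau_beta'_le unfolding X_def by (rule mult_right_mono) simp
  moreover have "W \<ge> 0" "Z \<ge> 0" "X \<ge> 0"
    unfolding W_def Z_def X_def using A_coerc(2) tau_pos rhs_nonneg by simp_all
  ultimately have "X + W \<le> 2 * M0\<^sup>2 + 4 * Z" using norm_uH_0_sq M0_nonneg by linarith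
  then show ?thesis unfolding X_def W_def Z_def by (simp add: algebra_simps)
qed

lemma energy_step_le:
  assumes n: "n \<in> {2..N}"
  shows "energy n - energy (n - 1) + 2 * \<alpha> * \<tau> * (norm (u n))\<^sup>2
    \<le> 4 * \<tau> * rhs n + 4 * \<tau> * \<beta>' * (norm (uH n))\<^sup>2"
proof -
  have n2: "n \<ge> 2" using n by auto
  have "4 * \<tau> * inner (j (dq n)) (uH n)
      = 4 * inner ((3/2) *\<^sub>R uH n - 2 *\<^sub>R uH (n - 1) + (1/2) *\<^sub>R uH (n - 2)) (uH n)"
    using inner_j_tau_dq[of n "uH n"] tau_dq[OF n2] unfolding uH_def by (simp add: linear_simps[OF j_lin])
  also have "\<dots> \<ge> energy n - energy (n - 1)"
    unfolding bdf2_identity energy_def using n2 by (simp add: numeral_2_eq_2)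
  finally have "energy n - energy (n - 1) + 2 * \<alpha> * \<tau> * (norm (u n))\<^sup>2
      \<le> 4 * \<tau> * (inner (j (dq n)) (uH n) + \<alpha> / 2 * (norm (u n))\<^sup>2)"
    by (simp add: algebra_simps)
  also have "\<dots> \<le> 4 * \<tau> * (rhs n + \<beta>' * (norm (uH n))\<^sup>2)"
    using tested_scheme_le[of n] n tau_pos by (intro mult_left_mono) auto
  finally show ?thesis by (simp add: algebra_simps)
qed

lemma energy_telescope_le:
  "m \<in> {1..N} \<Longrightarrow> energy m + 2 * \<alpha> * \<tau> * (\<Sum>n\<in>{2..m}. (norm (u n))\<^sup>2)
     \<le> energy 1 + (\<Sum>n\<in>{2..m}. 4 * \<tau> * rhs n + 4 * \<tau> * \<beta>' * (norm (uH n))\<^sup>2)"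
proof (induction m)
  case (Suc m)
  show ?case
  proof (cases "m = 0")
    case False
    then have "m \<in> {1..N}" "Suc m \<in> {2..N}" using Suc.prems by auto
    then show ?thesis using Suc.IH energy_step_le[of "Suc m"] False by (simp add: algebra_simps)
  qed simp
qed simp

definition "rhs_sum = 4 * \<tau> * (\<Sum>n\<in>{1..N}. rhs n)"
definition "C_rhs = (4 / \<alpha>) * (20 * \<Phi> + 20 * T) + 2 * d * T"
definition "C_init = 20 * M0\<^sup>2 + 10 * C_rhs"
definition "C_energy = 2 * C_init * exp (8 * \<beta>' * T)"
definition "C_V = (2 * M0\<^sup>2 + C_rhs) / \<alpha> + (C_init + 4 * \<beta>' * T * C_energy) / (2 * \<alpha>)"

lemma rhs_sum_nonneg: "rhs_sum \<ge> 0" unfolding rhs_sum_def using tau_pos rhs_nonneg by (simp add: sum_nonneg)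

lemma rhs_sum_le: "rhs_sum \<le> C_rhs"
proof -
  have "(\<Sum>n\<in>{1..N}. rhs n) = (\<Sum>n\<in>{1..N}. (f_dual n)\<^sup>2) / \<alpha> + real N * (d / 2)"
    unfolding rhs_def by (simp add: sum.distrib sum_divide_distrib)
  then have "rhs_sum = (4 / \<alpha>) * (\<tau> * (\<Sum>n\<in>{1..N}. (f_dual n)\<^sup>2)) + 2 * d * (real N * \<tau>)"
    unfolding rhs_sum_def by (simp add: algebra_simps)
  also have "\<dots> \<le> (4 / \<alpha>) * (20 * \<Phi> + 20 * T) + 2 * d * T"
    using mult_left_mono[OF sum_f_dual_sq_le, of "4 / \<alpha>"] A_coerc(2) unfolding N_tau by simp
  finally show ?thesis unfolding C_rhs_def .
qed

lemma partial_rhs_le: "I \<subseteq> {1..N} \<Longrightarrow> 4 * \<tau> * (\<Sum>n\<in>I. rhs n) \<le> rhs_sum"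
  unfolding rhs_sum_def using tau_pos rhs_nonneg by (intro mult_left_mono sum_mono2) auto

lemma energy_1_le: "energy 1 \<le> 20 * M0\<^sup>2 + 9 * rhs_sum"
proof -
  have "norm (2 *\<^sub>R uH 1 - uH 0) \<le> 2 * norm (uH 1) + norm (uH 0)"
    using norm_triangle_ineq4[of "2 *\<^sub>R uH 1" "uH 0"] by simp
  then have "(norm (2 *\<^sub>R uH 1 - uH 0))\<^sup>2 \<le> (2 * norm (uH 1) + norm (uH 0))\<^sup>2"
    by (simp add: power_mono)
  also have "\<dots> \<le> 8 * (norm (uH 1))\<^sup>2 + 2 * (norm (uH 0))\<^sup>2"
    using square_add_le[of "2 * norm (uH 1)" "norm (uH 0)"] by (simp add: power_mult_distrib)
  finally have "energy 1 \<le> 9 * (norm (uH 1))\<^sup>2 + 2 * M0\<^sup>2"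
    unfolding energy_def using norm_uH_0_sq by simp
  moreover have "4 * \<tau> * rhs 1 \<le> rhs_sum" using partial_rhs_le[of "{1}"] N_pos by simp
  moreover have "\<alpha> * \<tau> * (norm (u 1))\<^sup>2 \<ge> 0" using A_coerc(2) tau_pos by simp
  ultimately show ?thesis using first_step_le by linarith
qed

lemma energy_recursive_le:
  assumes m: "m \<in> {1..N}"
  shows "energy m \<le> (20 * M0\<^sup>2 + 10 * rhs_sum) + (4 * \<tau> * \<beta>') * (\<Sum>n\<in>{1..m}. energy n)"
proof -
  have "(\<Sum>n\<in>{2..m}. 4 * \<tau> * rhs n + 4 * \<tau> * \<beta>' * (norm (uH n))\<^sup>2)
      = 4 * \<tau> * (\<Sum>n\<in>{2..m}. rhs n) + (4 * \<tau> * \<beta>') * (\<Sum>n\<in>{2..m}. (norm (uH n))\<^sup>2)"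
    by (simp add: sum.distrib sum_distrib_left mult.assoc)
  moreover have "4 * \<tau> * (\<Sum>n\<in>{2..m}. rhs n) \<le> rhs_sum" using m by (intro partial_rhs_le) auto
  moreover have "(\<Sum>n\<in>{2..m}. (norm (uH n))\<^sup>2) \<le> (\<Sum>n\<in>{1..m}. energy n)"
  proof -
    have "(\<Sum>n\<in>{2..m}. (norm (uH n))\<^sup>2) \<le> (\<Sum>n\<in>{2..m}. energy n)"
      unfolding energy_def by (rule sum_mono) simp
    also have "\<dots> \<le> (\<Sum>n\<in>{1..m}. energy n)" using energy_nonneg by (intro sum_mono2) auto
    finally show ?thesis .
  qed
  then have "(4 * \<tau> * \<beta>') * (\<Sum>n\<in>{2..m}. (norm (uH n))\<^sup>2) \<le> (4 * \<tau> * \<beta>') * (\<Sum>n\<in>{1..m}. energy n)"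
    using tau_pos beta'_nonneg by (intro mult_left_mono) auto
  moreover have "2 * \<alpha> * \<tau> * (\<Sum>n\<in>{2..m}. (norm (u n))\<^sup>2) \<ge> 0"
    using A_coerc(2) tau_pos by (simp add: sum_nonneg)
  ultimately show ?thesis using energy_telescope_le[OF m] energy_1_le by linarith
qed

lemma energy_le:
  assumes m: "m \<in> {1..N}"
  shows "energy m \<le> C_energy"
proof -
  define q where "q = 4 * \<tau> * \<beta>'"
  define B where "B = 20 * M0\<^sup>2 + 10 * rhs_sum"
  have q: "0 \<le> q" "q \<le> 1/2" unfolding q_def using tau_pos beta'_nonneg tau_beta'_le by simp_all
  have B: "B \<ge> 0" unfolding B_def using rhs_sum_nonneg by simp
  have rec: "\<And>m. m \<in> {1..N} \<Longrightarrow> energy m \<le> B + q * (\<Sum>n\<in>{1..m}. energy n)"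
    unfolding q_def B_def by (rule energy_recursive_le)
  have "energy m \<le> 2 * B * (1 + 2 * q) ^ m"
    by (rule discrete_gronwall[OF q B energy_nonneg rec m])
  also have "\<dots> \<le> 2 * B * exp (2 * q) ^ N"
  proof (rule mult_left_mono)
    have "(1 + 2 * q) ^ m \<le> (1 + 2 * q) ^ N" using m q by (intro power_increasing) auto
    also have "\<dots> \<le> exp (2 * q) ^ N" using q by (intro power_mono) simp_all
    finally show "(1 + 2 * q) ^ m \<le> exp (2 * q) ^ N" .
  qed (use B in simp)
  also have "exp (2 * q) ^ N = exp (8 * \<beta>' * (real N * \<tau>))"
    unfolding q_def exp_of_nat_mult[symmetric] by (simp add: algebra_simps)
  also have "\<dots> = exp (8 * \<beta>' * T)" unfolding N_tau ..
  also have "2 * B * exp (8 * \<beta>' * T) \<le> C_energy"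
    unfolding C_energy_def C_init_def B_def using rhs_sum_le by simp
  finally show ?thesis .
qed

lemma C_energy_nonneg: "C_energy \<ge> 0"
  using energy_le[of 1] N_pos energy_nonneg[of 1] by simp

lemma norm_uH_sq_le:
  assumes k: "k \<le> N"
  shows "(norm (uH k))\<^sup>2 \<le> M0\<^sup>2 + C_energy"
proof (cases "k = 0")
  case True
  then show ?thesis using norm_uH_0_sq C_energy_nonneg by simp
next
  case False
  then have "(norm (uH k))\<^sup>2 \<le> energy k" unfolding energy_def by simp
  also have "\<dots> \<le> C_energy" using energy_le k False by auto
  finally show ?thesis by (simp add: add_increasing)
qed

lemma sum_norm_uH_sq_le: "\<tau> * (\<Sum>n\<in>{2..N}. (norm (uH n))\<^sup>2) \<le> T * C_energy"
proof -
  have "(\<Sum>n\<in>{2..N}. (norm (uH n))\<^sup>2) \<le> (\<Sum>n\<in>{2..N}. C_energy)"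
  proof (rule sum_mono)
    fix n assume "n \<in> {2..N}"
    then have "(norm (uH n))\<^sup>2 \<le> energy n" "energy n \<le> C_energy"
      using energy_le unfolding energy_def by auto
    then show "(norm (uH n))\<^sup>2 \<le> C_energy" by linarith
  qed
  also have "\<dots> \<le> real N * C_energy" using C_energy_nonneg by (simp add: mult_right_mono)
  finally have "\<tau> * (\<Sum>n\<in>{2..N}. (norm (uH n))\<^sup>2) \<le> \<tau> * (real N * C_energy)"
    using tau_pos by (intro mult_left_mono) auto
  also have "\<dots> = (real N * \<tau>) * C_energy" by simp
  finally show ?thesis unfolding N_tau .
qed

lemma sum_norm_u_sq_le: "\<tau> * (\<Sum>n\<in>{1..N}. (norm (u n))\<^sup>2) \<le> C_V"
proof -
  have uH_sum: "(4 * \<tau> * \<beta>') * (\<Sum>n\<in>{2..N}. (norm (uH n))\<^sup>2) \<le> 4 * \<beta>' * T * C_energy"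
    using mult_left_mono[OF sum_norm_uH_sq_le, of "4 * \<beta>'"] beta'_nonneg by (simp add: algebra_simps)
  have "(\<Sum>n\<in>{2..N}. 4 * \<tau> * rhs n + 4 * \<tau> * \<beta>' * (norm (uH n))\<^sup>2)
      = 4 * \<tau> * (\<Sum>n\<in>{2..N}. rhs n) + (4 * \<tau> * \<beta>') * (\<Sum>n\<in>{2..N}. (norm (uH n))\<^sup>2)"
    by (simp add: sum.distrib sum_distrib_left mult.assoc)
  moreover have "4 * \<tau> * (\<Sum>n\<in>{2..N}. rhs n) \<le> rhs_sum" by (intro partial_rhs_le) auto
  ultimately have "2 * \<alpha> * \<tau> * (\<Sum>n\<in>{2..N}. (norm (u n))\<^sup>2) \<le> C_init + 4 * \<beta>' * T * C_energy"
    using energy_telescope_le[of N] N_pos energy_1_le energy_nonneg[of N] rhs_sum_le uH_sum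
      atLeastAtMost_iff[of N 1 N]
    unfolding C_init_def by linarith
  then have "\<tau> * (\<Sum>n\<in>{2..N}. (norm (u n))\<^sup>2) \<le> (C_init + 4 * \<beta>' * T * C_energy) / (2 * \<alpha>)"
    using A_coerc(2) by (simp add: field_simps)
  moreover have "\<tau> * (norm (u 1))\<^sup>2 \<le> (2 * M0\<^sup>2 + C_rhs) / \<alpha>"
  proof -
    have "4 * \<tau> * rhs 1 \<le> rhs_sum" using partial_rhs_le[of "{1}"] N_pos by simp
    then have "\<alpha> * \<tau> * (norm (u 1))\<^sup>2 \<le> 2 * M0\<^sup>2 + C_rhs"
      using first_step_le rhs_sum_le zero_le_power2[of "norm (uH 1)"] by linarith
    then show ?thesis using A_coerc(2) by (simp add: field_simps)
  qed
  moreover have "(\<Sum>n\<in>{1..N}. (norm (u n))\<^sup>2) = (norm (u 1))\<^sup>2 + (\<Sum>n\<in>{2..N}. (norm (u n))\<^sup>2)"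
    using N_pos by (simp add: sum.atLeast_Suc_atMost numeral_2_eq_2)
  ultimately show ?thesis unfolding C_V_def by (simp add: algebra_simps)
qed

subsection \<open>Estimates in \<open>V\<^sup>*\<close>\<close>

definition "C_dq = 3 * ((20 * \<Phi> + 20 * T) + (a + Ki * d)\<^sup>2 * T + (b + Ki\<^sup>2 * d)\<^sup>2 * C_V)"
definition "C_xi = 2 * d\<^sup>2 * T + 2 * d\<^sup>2 * Ki\<^sup>2 * C_V"

lemma norm_toVs_dq_le:
  assumes n: "n \<in> {1..N}"
  shows "norm (toVs j (dq n)) \<le> f_dual n + (a + Ki * d) + (b + Ki\<^sup>2 * d) * norm (u n)"
proof (rule norm_blinfun_bound)
  show "0 \<le> f_dual n + (a + Ki * d) + (b + Ki\<^sup>2 * d) * norm (u n)"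
    using f_dual_nonneg A_growth Ki J_growth by (simp add: add_nonneg_nonneg)
  fix v
  have "blinfun_apply (toVs j (dq n)) v
      = ftau T f N n v - blinfun_apply (A (u n)) v - blinfun_apply (xi n) (iota v)"
    using scheme_eq[OF n, of v] toVs_apply[OF j_lin] by simp
  then have "norm (blinfun_apply (toVs j (dq n)) v)
      \<le> \<bar>ftau T f N n v\<bar> + norm (A (u n)) * norm v + norm (xi n) * norm (iota v)"
    using norm_blinfun[of "A (u n)" v] norm_blinfun[of "xi n" "iota v"] by simp
  also have "\<dots> \<le> f_dual n * norm v + (a + b * norm (u n)) * norm v
      + (d * (1 + Ki * norm (u n))) * (Ki * norm v)"
    using abs_ftau_le[OF n, of v] A_growth norm_xi_le[OF n] Ki J_growth
    by (intro add_mono mult_mono) auto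
  also have "\<dots> = (f_dual n + (a + Ki * d) + (b + Ki\<^sup>2 * d) * norm (u n)) * norm v"
    by (simp add: algebra_simps power2_eq_square)
  finally show "norm (blinfun_apply (toVs j (dq n)) v)
      \<le> (f_dual n + (a + Ki * d) + (b + Ki\<^sup>2 * d) * norm (u n)) * norm v" .
qed

lemma sum_norm_toVs_dq_sq_le: "\<tau> * (\<Sum>n\<in>{1..N}. (norm (toVs j (dq n)))\<^sup>2) \<le> C_dq"
proof -
  have "(norm (toVs j (dq n)))\<^sup>2
      \<le> 3 * (f_dual n)\<^sup>2 + 3 * (a + Ki * d)\<^sup>2 + 3 * (b + Ki\<^sup>2 * d)\<^sup>2 * (norm (u n))\<^sup>2"
    if n: "n \<in> {1..N}" for n
  proof -
    have "(norm (toVs j (dq n)))\<^sup>2 \<le> (f_dual n + (a + Ki * d) + (b + Ki\<^sup>2 * d) * norm (u n))\<^sup>2"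
      using norm_toVs_dq_le[OF n] by (simp add: power_mono)
    also have "\<dots> \<le> 3 * (f_dual n)\<^sup>2 + 3 * (a + Ki * d)\<^sup>2 + 3 * ((b + Ki\<^sup>2 * d) * norm (u n))\<^sup>2"
      by (rule square_add3_le)
    finally show ?thesis by (simp add: power_mult_distrib)
  qed
  then have "\<tau> * (\<Sum>n\<in>{1..N}. (norm (toVs j (dq n)))\<^sup>2)
      \<le> \<tau> * (\<Sum>n\<in>{1..N}. 3 * (f_dual n)\<^sup>2 + 3 * (a + Ki * d)\<^sup>2 + 3 * (b + Ki\<^sup>2 * d)\<^sup>2 * (norm (u n))\<^sup>2)"
    using tau_pos by (intro mult_left_mono sum_mono) auto
  also have "\<dots> = 3 * (\<tau> * (\<Sum>n\<in>{1..N}. (f_dual n)\<^sup>2)) + 3 * (a + Ki * d)\<^sup>2 * (real N * \<tau>)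
       + 3 * (b + Ki\<^sup>2 * d)\<^sup>2 * (\<tau> * (\<Sum>n\<in>{1..N}. (norm (u n))\<^sup>2))"
    by (simp add: sum.distrib sum_distrib_left algebra_simps)
  also have "\<dots> \<le> 3 * (20 * \<Phi> + 20 * T) + 3 * (a + Ki * d)\<^sup>2 * T + 3 * (b + Ki\<^sup>2 * d)\<^sup>2 * C_V"
    using sum_f_dual_sq_le sum_norm_u_sq_le unfolding N_tau by (intro add_mono mult_left_mono) auto
  finally show ?thesis unfolding C_dq_def by (simp add: algebra_simps)
qed

lemma sum_norm_xi_sq_le: "\<tau> * (\<Sum>n\<in>{1..N}. (norm (xi n))\<^sup>2) \<le> C_xi"
proof -
  have "(norm (xi n))\<^sup>2 \<le> 2 * d\<^sup>2 + 2 * d\<^sup>2 * Ki\<^sup>2 * (norm (u n))\<^sup>2" if n: "n \<in> {1..N}" for n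
  proof -
    have "(norm (xi n))\<^sup>2 \<le> (d + d * Ki * norm (u n))\<^sup>2"
      using norm_xi_le[OF n] by (intro power_mono) (auto simp: algebra_simps)
    also have "\<dots> \<le> 2 * d\<^sup>2 + 2 * (d * Ki * norm (u n))\<^sup>2" by (rule square_add_le)
    finally show ?thesis by (simp add: power_mult_distrib)
  qed
  then have "\<tau> * (\<Sum>n\<in>{1..N}. (norm (xi n))\<^sup>2) \<le> \<tau> * (\<Sum>n\<in>{1..N}. 2 * d\<^sup>2 + 2 * d\<^sup>2 * Ki\<^sup>2 * (norm (u n))\<^sup>2)"
    using tau_pos by (intro mult_left_mono sum_mono) auto
  also have "\<dots> = 2 * d\<^sup>2 * (real N * \<tau>) + 2 * d\<^sup>2 * Ki\<^sup>2 * (\<tau> * (\<Sum>n\<in>{1..N}. (norm (u n))\<^sup>2))"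
    by (simp add: sum.distrib sum_distrib_left algebra_simps)
  also have "\<dots> \<le> 2 * d\<^sup>2 * T + 2 * d\<^sup>2 * Ki\<^sup>2 * C_V"
    using sum_norm_u_sq_le unfolding N_tau by (intro add_mono mult_left_mono) auto
  finally show ?thesis unfolding C_xi_def .
qed

lemma sum_norm_u_sq_le_with_init: "\<tau> * (\<Sum>k\<in>{0..N}. (norm (u k))\<^sup>2) \<le> c0\<^sup>2 + C_V"
  using init_V sum_norm_u_sq_le unfolding \<tau>_def[symmetric]
  by (simp add: sum.atLeast_Suc_atMost algebra_simps)

lemma C_V_nonneg: "C_V \<ge> 0"
  using sum_norm_u_sq_le tau_pos sum_nonneg[of "{1..N}" "\<lambda>n. (norm (u n))\<^sup>2"]
  by (smt (verit) mult_nonneg_nonneg zero_le_power2)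

lemma C_dq_nonneg: "C_dq \<ge> 0"
  using sum_norm_toVs_dq_sq_le tau_pos sum_nonneg[of "{1..N}" "\<lambda>n. (norm (toVs j (dq n)))\<^sup>2"]
  by (smt (verit) mult_nonneg_nonneg zero_le_power2)

lemma C_xi_nonneg: "C_xi \<ge> 0"
  using sum_norm_xi_sq_le tau_pos sum_nonneg[of "{1..N}" "\<lambda>n. (norm (xi n))\<^sup>2"]
  by (smt (verit) mult_nonneg_nonneg zero_le_power2)

subsection \<open>Squared jumps in \<open>V\<^sup>*\<close>\<close>

definition "jump_sq l = (norm (toVs j (u (Suc l)) - toVs j (u l)))\<^sup>2"

lemma jump_sq_nonneg: "jump_sq l \<ge> 0" unfolding jump_sq_def by simp

lemma jump_sq_0: "jump_sq 0 = \<tau>\<^sup>2 * (norm (toVs j (dq 1)))\<^sup>2"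
proof -
  note lin = linear_toVs[OF j_lin]
  have "toVs j (u 1) - toVs j (u 0) = toVs j (\<tau> *\<^sub>R dq 1)"
    unfolding tau_dq_1 linear_diff[OF lin] ..
  also have "\<dots> = \<tau> *\<^sub>R toVs j (dq 1)" by (rule linear_scale[OF lin])
  finally have "toVs j (u 1) - toVs j (u 0) = \<tau> *\<^sub>R toVs j (dq 1)" .
  then show ?thesis unfolding jump_sq_def using tau_pos by (simp add: power_mult_distrib)
qed

text \<open>By the scheme, \<open>u (l+1) - u l = (u l - u (l-1))/3 + (2/3) \<tau> dq (l+1)\<close>, a convex combination.\<close>
lemma jump_sq_le:
  assumes l: "l \<ge> 1" "Suc l \<le> N"
  shows "jump_sq l \<le> jump_sq (l - 1) / 3 + 2 * (\<tau>\<^sup>2 * (norm (toVs j (dq (Suc l))))\<^sup>2) / 3"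
proof -
  note lin = linear_toVs[OF j_lin]
  have "\<tau> *\<^sub>R dq (Suc l) = (3/2) *\<^sub>R u (Suc l) - 2 *\<^sub>R u l + (1/2) *\<^sub>R u (l - 1)"
    using tau_dq[of "Suc l"] l by (simp add: numeral_2_eq_2)
  then have "(2/3) *\<^sub>R (\<tau> *\<^sub>R dq (Suc l))
      = (2/3) *\<^sub>R ((3/2) *\<^sub>R u (Suc l) - 2 *\<^sub>R u l + (1/2) *\<^sub>R u (l - 1))"
    by (simp only:)
  also have "\<dots> = u (Suc l) - (4/3) *\<^sub>R u l + (1/3) *\<^sub>R u (l - 1)"
    by (simp add: algebra_simps)
  finally have "(2/3) *\<^sub>R (\<tau> *\<^sub>R dq (Suc l)) = u (Suc l) - (4/3) *\<^sub>R u l + (1/3) *\<^sub>R u (l - 1)" .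
  moreover have "(4/3) *\<^sub>R u l = u l + (1/3) *\<^sub>R u l"
    using scaleR_add_left[of 1 "1/3" "u l"] by simp
  ultimately have "u (Suc l) - u l = (1/3) *\<^sub>R (u l - u (l - 1)) + (2/3) *\<^sub>R (\<tau> *\<^sub>R dq (Suc l))"
    by (simp add: algebra_simps)
  then have "toVs j (u (Suc l)) - toVs j (u l)
      = (1/3) *\<^sub>R (toVs j (u l) - toVs j (u (l - 1))) + (2/3) *\<^sub>R (\<tau> *\<^sub>R toVs j (dq (Suc l)))"
    by (simp add: linear_diff[OF lin, symmetric] linear_add[OF lin] linear_scale[OF lin])
  then have "norm (toVs j (u (Suc l)) - toVs j (u l))
      \<le> norm (toVs j (u l) - toVs j (u (l - 1))) / 3 + 2 * (\<tau> * norm (toVs j (dq (Suc l)))) / 3"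
    using norm_triangle_ineq[of "(1/3) *\<^sub>R (toVs j (u l) - toVs j (u (l - 1)))"
        "(2/3) *\<^sub>R (\<tau> *\<^sub>R toVs j (dq (Suc l)))"] tau_pos by simp
  then have "jump_sq l \<le> (norm (toVs j (u l) - toVs j (u (l - 1))) / 3 + 2 * (\<tau> * norm (toVs j (dq (Suc l)))) / 3)\<^sup>2"
    unfolding jump_sq_def by (intro power_mono) auto
  also have "\<dots> \<le> (norm (toVs j (u l) - toVs j (u (l - 1))))\<^sup>2 / 3 + 2 * (\<tau> * norm (toVs j (dq (Suc l))))\<^sup>2 / 3"
    by (rule square_convex_third)
  finally show ?thesis unfolding jump_sq_def using l by (simp add: power_mult_distrib)
qed

lemma sum_jump_sq_le:
  "m \<in> {1..N} \<Longrightarrow> (\<Sum>l<m. jump_sq l) + jump_sq (m - 1) / 2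
    \<le> (3/2) * \<tau>\<^sup>2 * (\<Sum>n\<in>{1..m}. (norm (toVs j (dq n)))\<^sup>2)"
proof (induction m)
  case (Suc m)
  show ?case
  proof (cases "m = 0")
    case True
    then show ?thesis using jump_sq_0 by simp
  next
    case False
    then have "m \<in> {1..N}" using Suc.prems by auto
    then have "(\<Sum>l<m. jump_sq l) + jump_sq (m - 1) / 2
        \<le> (3/2) * \<tau>\<^sup>2 * (\<Sum>n\<in>{1..m}. (norm (toVs j (dq n)))\<^sup>2)"
      by (rule Suc.IH)
    moreover have "jump_sq m \<le> jump_sq (m - 1) / 3 + 2 * (\<tau>\<^sup>2 * (norm (toVs j (dq (Suc m))))\<^sup>2) / 3"
      using jump_sq_le[of m] False Suc.prems by auto
    moreover have "(3/2) * \<tau>\<^sup>2 * (\<Sum>n\<in>{1..Suc m}. (norm (toVs j (dq n)))\<^sup>2)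
        = (3/2) * \<tau>\<^sup>2 * (\<Sum>n\<in>{1..m}. (norm (toVs j (dq n)))\<^sup>2)
          + (3/2) * (\<tau>\<^sup>2 * (norm (toVs j (dq (Suc m))))\<^sup>2)"
      by (simp add: algebra_simps)
    moreover have "0 \<le> \<tau>\<^sup>2 * (norm (toVs j (dq (Suc m))))\<^sup>2" by simp
    moreover have "(\<Sum>l<Suc m. jump_sq l) = (\<Sum>l<m. jump_sq l) + jump_sq m" by simp
    ultimately show ?thesis unfolding diff_Suc_1 by linarith
  qed
qed simp

lemma N_sum_jump_sq_le: "real N * (\<Sum>l<N. jump_sq l) \<le> (3/2) * T * C_dq"
proof -
  have "(\<Sum>l<N. jump_sq l) \<le> (3/2) * \<tau>\<^sup>2 * (\<Sum>n\<in>{1..N}. (norm (toVs j (dq n)))\<^sup>2)"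
    using sum_jump_sq_le[of N] N_pos jump_sq_nonneg[of "N - 1"] by simp
  also have "\<dots> = (3/2) * \<tau> * (\<tau> * (\<Sum>n\<in>{1..N}. (norm (toVs j (dq n)))\<^sup>2))"
    by (simp add: power2_eq_square)
  also have "\<dots> \<le> (3/2) * \<tau> * C_dq"
    using sum_norm_toVs_dq_sq_le tau_pos by (intro mult_left_mono) auto
  finally have "real N * (\<Sum>l<N. jump_sq l) \<le> real N * ((3/2) * \<tau> * C_dq)"
    by (intro mult_left_mono) auto
  also have "\<dots> = (3/2) * (real N * \<tau>) * C_dq" by simp
  finally show ?thesis unfolding N_tau .
qed

lemma norm_toVs_diff_sq_le:
  assumes "k \<le> m" "m \<le> N"
  shows "(norm (toVs j (u m) - toVs j (u k)))\<^sup>2 \<le> real N * ((\<Sum>l<m. jump_sq l) - (\<Sum>l<k. jump_sq l))"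
proof -
  have "toVs j (u m) - toVs j (u k) = (\<Sum>l\<in>{k..<m}. toVs j (u (Suc l)) - toVs j (u l))"
    using sum_Suc_diff'[OF assms(1), of "\<lambda>l. toVs j (u l)"] by simp
  then have "norm (toVs j (u m) - toVs j (u k)) \<le> (\<Sum>l\<in>{k..<m}. norm (toVs j (u (Suc l)) - toVs j (u l)))"
    by (simp add: norm_sum)
  then have "(norm (toVs j (u m) - toVs j (u k)))\<^sup>2 \<le> (\<Sum>l\<in>{k..<m}. norm (toVs j (u (Suc l)) - toVs j (u l)))\<^sup>2"
    by (intro power_mono) auto
  also have "\<dots> \<le> (\<Sum>l\<in>{k..<m}. jump_sq l) * real (card {k..<m})"
    unfolding jump_sq_def by (rule sum_squared_le_sum_of_squares)
  also have "\<dots> \<le> (\<Sum>l\<in>{k..<m}. jump_sq l) * real N"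
    using assms jump_sq_nonneg by (intro mult_left_mono) (auto simp: sum_nonneg)
  also have "(\<Sum>l\<in>{k..<m}. jump_sq l) = (\<Sum>l<m. jump_sq l) - (\<Sum>l<k. jump_sq l)"
    using assms by (simp add: sum_diff_nat_ivl lessThan_atLeast0)
  finally show ?thesis by (simp add: mult.commute)
qed

lemma sum_chain_jumps_le:
  assumes mono: "\<And>i. i < L \<Longrightarrow> k i \<le> k (Suc i)" and top: "k L \<le> N"
  shows "(\<Sum>i<L. (norm (toVs j (u (k (Suc i))) - toVs j (u (k i))))\<^sup>2) \<le> (3/2) * T * C_dq"
proof -
  define S where "S m = (\<Sum>l<m. jump_sq l)" for m
  have S_mono: "m \<le> m' \<Longrightarrow> S m \<le> S m'" for m m'
    unfolding S_def using jump_sq_nonneg by (intro sum_mono2) auto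
  have k_le: "k i \<le> k L" if "i \<le> L" for i
    using that mono by (induction rule: inc_induct) (auto intro: order_trans)
  have "(\<Sum>i<L. (norm (toVs j (u (k (Suc i))) - toVs j (u (k i))))\<^sup>2) \<le> (\<Sum>i<L. real N * (S (k (Suc i)) - S (k i)))"
  proof (rule sum_mono)
    fix i assume "i \<in> {..<L}"
    then show "(norm (toVs j (u (k (Suc i))) - toVs j (u (k i))))\<^sup>2 \<le> real N * (S (k (Suc i)) - S (k i))"
      unfolding S_def using k_le[of "Suc i"] top by (intro norm_toVs_diff_sq_le mono) auto
  qed
  also have "\<dots> = real N * (S (k L) - S (k 0))"
    using sum_lessThan_telescope[of "\<lambda>i. S (k i)" L] by (simp add: sum_distrib_left[symmetric])
  also have "\<dots> \<le> real N * S N"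
    using S_mono[OF top] S_mono[of 0 "k 0"] by (intro mult_left_mono) (auto simp: S_def)
  also have "\<dots> \<le> (3/2) * T * C_dq" unfolding S_def by (rule N_sum_jump_sq_le)
  finally show ?thesis .
qed

subsection \<open>Interpolants\<close>

definition "step_of t = nat \<lceil>t / \<tau>\<rceil>"
definition "uhat_step t = max 1 (step_of t)"

lemma step_of_le: "t \<le> T \<Longrightarrow> step_of t \<le> N"
proof -
  assume "t \<le> T"
  then have "t / \<tau> \<le> real N" using tau_pos N_tau by (simp add: divide_le_eq mult.commute)
  then show ?thesis unfolding step_of_def by (simp add: ceiling_le_iff nat_le_iff)
qed

lemma step_of_mono: "t \<le> t' \<Longrightarrow> step_of t \<le> step_of t'"
  unfolding step_of_def using tau_pos by (intro nat_mono ceiling_mono divide_right_mono) auto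

lemma step_of_mem:
  assumes "0 < t" "t \<le> T"
  shows "step_of t \<in> {1..N}" "real (step_of t) - 1 < t / \<tau>" "t / \<tau> \<le> real (step_of t)"
    "t \<in> {(real (step_of t) - 1) * \<tau> .. real (step_of t) * \<tau>}"
proof -
  have c: "\<lceil>t / \<tau>\<rceil> \<ge> 1" using assms tau_pos by (simp add: one_le_ceiling)
  then have k: "real (step_of t) = of_int \<lceil>t / \<tau>\<rceil>" unfolding step_of_def by simp
  have "nat 1 \<le> step_of t" unfolding step_of_def using c by (rule nat_mono)
  then show "step_of t \<in> {1..N}" using step_of_le[OF assms(2)] by simp
  show a: "real (step_of t) - 1 < t / \<tau>" unfolding k by linarith
  show b: "t / \<tau> \<le> real (step_of t)" unfolding k by (rule le_of_int_ceiling)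
  show "t \<in> {(real (step_of t) - 1) * \<tau> .. real (step_of t) * \<tau>}"
    using a b tau_pos by (simp add: field_simps)
qed

lemma uhat_step_mem:
  assumes t: "t \<in> {0..T}"
  shows "uhat_step t \<in> {1..N}" "t \<in> {(real (uhat_step t) - 1) * \<tau> .. real (uhat_step t) * \<tau>}"
proof -
  have "uhat_step t \<in> {1..N} \<and> t \<in> {(real (uhat_step t) - 1) * \<tau> .. real (uhat_step t) * \<tau>}"
  proof (cases "t = 0")
    case True
    then show ?thesis using N_pos tau_pos unfolding uhat_step_def step_of_def by simp
  next
    case False
    then have "0 < t" using t by simp
    then show ?thesis using step_of_mem[of t] t unfolding uhat_step_def by (auto simp: max_def)
  qed
  then show "uhat_step t \<in> {1..N}" "t \<in> {(real (uhat_step t) - 1) * \<tau> .. real (uhat_step t) * \<tau>}"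
    by auto
qed

lemma ubar_eq: "t \<in> {0..T} \<Longrightarrow> ubar T N u t = u (step_of t)"
  unfolding ubar_def step_of_def \<tau>_def by auto

lemma xibar_eq: "xibar T N xi t = xi (step_of t)"
  unfolding xibar_def step_of_def \<tau>_def ..

lemma uhat_eq:
  "uhat T N u t = (3/2) *\<^sub>R u (uhat_step t) - (1/2) *\<^sub>R u (uhat_step t - 1)
    + (t - real (uhat_step t) * \<tau>) *\<^sub>R dq (uhat_step t)"
proof -
  define n where "n = uhat_step t"
  have n: "max 1 (nat \<lceil>t / \<tau>\<rceil>) = n" unfolding n_def uhat_step_def step_of_def ..
  have sc: "((t - real n * \<tau>) / \<tau>) *\<^sub>R (\<tau> *\<^sub>R dq n) = (t - real n * \<tau>) *\<^sub>R dq n"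
    using tau_pos by simp
  have "uhat T N u t = (3/2) *\<^sub>R u n - (1/2) *\<^sub>R u (n - 1) + (t - real n * \<tau>) *\<^sub>R dq n"
  proof (cases "n = 1")
    case True
    then show ?thesis
      using sc unfolding uhat_def Let_def \<tau>_def[symmetric] n True tau_dq_1[symmetric] by simp
  next
    case False
    then have "n \<ge> 2" unfolding n_def uhat_step_def by auto
    then show ?thesis
      using sc False unfolding uhat_def Let_def \<tau>_def[symmetric] n tau_dq[OF \<open>n \<ge> 2\<close>, symmetric]
      by simp
  qed
  then show ?thesis unfolding n_def .
qed

lemma norm_linear_uhat_le:
  assumes Lm: "bounded_linear Lm" and t: "t \<in> {0..T}"
  shows "norm (Lm (uhat T N u t))
    \<le> 3 * (norm (Lm (u (uhat_step t))) + norm (Lm (u (uhat_step t - 1))) + norm (Lm (u (uhat_step t - 2))))"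
proof -
  define n where "n = uhat_step t"
  define s where "s = (t - real n * \<tau>) / \<tau>"
  note L = linear_simps[OF Lm]
  have s: "\<bar>s\<bar> \<le> 1"
    using uhat_step_mem(2)[OF t] tau_pos unfolding s_def n_def by (simp add: abs_le_iff field_simps)
  have "uhat T N u t = ((3/2) *\<^sub>R u n - (1/2) *\<^sub>R u (n - 1)) + s *\<^sub>R (\<tau> *\<^sub>R dq n)"
    unfolding uhat_eq s_def n_def using tau_pos by simp
  then have "Lm (uhat T N u t) = Lm ((3/2) *\<^sub>R u n - (1/2) *\<^sub>R u (n - 1)) + s *\<^sub>R Lm (\<tau> *\<^sub>R dq n)"
    by (simp add: L)
  then have sum: "norm (Lm (uhat T N u t))
      \<le> norm (Lm ((3/2) *\<^sub>R u n - (1/2) *\<^sub>R u (n - 1))) + norm (Lm (\<tau> *\<^sub>R dq n))"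
    using norm_add_scaleR_le[OF s] by simp
  have base: "norm (Lm ((3/2) *\<^sub>R u n - (1/2) *\<^sub>R u (n - 1)))
      \<le> (3/2) * norm (Lm (u n)) + (1/2) * norm (Lm (u (n - 1)))"
    unfolding L using norm_triangle_ineq4[of "(3/2) *\<^sub>R Lm (u n)" "(1/2) *\<^sub>R Lm (u (n - 1))"] by simp
  have slope: "norm (Lm (\<tau> *\<^sub>R dq n))
      \<le> (3/2) * norm (Lm (u n)) + 2 * norm (Lm (u (n - 1))) + (1/2) * norm (Lm (u (n - 2)))"
  proof (cases "n = 1")
    case True
    have "norm (Lm (u 1) - Lm (u 0)) \<le> (3/2) * norm (Lm (u 1)) + 2 * norm (Lm (u 0)) + (1/2) * norm (Lm (u 0))"
      using norm_triangle_ineq4[of "Lm (u 1)" "Lm (u 0)"] norm_ge_zero[of "Lm (u 0)"] norm_ge_zero[of "Lm (u 1)"]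
      by linarith
    then show ?thesis unfolding True tau_dq_1 L by simp
  next
    case False
    then have "n \<ge> 2" using uhat_step_mem(1)[OF t] unfolding n_def by auto
    then show ?thesis
      unfolding tau_dq[OF \<open>n \<ge> 2\<close>] L
      using norm_diff_add_le[of "(3/2) *\<^sub>R Lm (u n)" "2 *\<^sub>R Lm (u (n - 1))" "(1/2) *\<^sub>R Lm (u (n - 2))"]
      by simp
  qed
  show ?thesis
    unfolding n_def[symmetric] distrib_left using sum base slope norm_ge_zero[of "Lm (u (n - 1))"] norm_ge_zero[of "Lm (u (n - 2))"]
    by linarith
qed

lemma L2_ubar_le: "L2_norm T (ubar T N u) \<le> ennreal (sqrt C_V)"
  unfolding L2_norm_def
proof (rule ensqrt_le_ennreal)
  have "(\<integral>\<^sup>+ t. ennreal ((norm (ubar T N u t))\<^sup>2) \<partial>lebesgue_on {0..T}) \<le> ennreal (\<tau> * (\<Sum>n\<in>{1..N}. (norm (u n))\<^sup>2))"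
  proof (rule nn_integral_step_function_le[OF tau_pos N_tau, of "{0}"])
    fix t assume "t \<in> {0..T}" "t \<notin> {0}"
    then show "\<exists>n\<in>{1..N}. t \<in> {(real n - 1) * \<tau> .. real n * \<tau>} \<and> (norm (ubar T N u t))\<^sup>2 \<le> (norm (u n))\<^sup>2"
      using step_of_mem[of t] ubar_eq[of t] by (intro bexI[of _ "step_of t"]) auto
  qed auto
  also have "\<dots> \<le> ennreal C_V" using sum_norm_u_sq_le by (simp add: ennreal_leI)
  finally show "(\<integral>\<^sup>+ t. ennreal ((norm (ubar T N u t))\<^sup>2) \<partial>lebesgue_on {0..T}) \<le> ennreal ((sqrt C_V)\<^sup>2)"
    using C_V_nonneg by simp
qed (use C_V_nonneg in simp)

lemma L2_xibar_le: "L2_norm T (xibar T N xi) \<le> ennreal (sqrt C_xi)"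
  unfolding L2_norm_def
proof (rule ensqrt_le_ennreal)
  have "(\<integral>\<^sup>+ t. ennreal ((norm (xibar T N xi t))\<^sup>2) \<partial>lebesgue_on {0..T}) \<le> ennreal (\<tau> * (\<Sum>n\<in>{1..N}. (norm (xi n))\<^sup>2))"
  proof (rule nn_integral_step_function_le[OF tau_pos N_tau, of "{0}"])
    fix t assume "t \<in> {0..T}" "t \<notin> {0}"
    then show "\<exists>n\<in>{1..N}. t \<in> {(real n - 1) * \<tau> .. real n * \<tau>} \<and> (norm (xibar T N xi t))\<^sup>2 \<le> (norm (xi n))\<^sup>2"
      using step_of_mem[of t] xibar_eq[of t] by (intro bexI[of _ "step_of t"]) auto
  qed auto
  also have "\<dots> \<le> ennreal C_xi" using sum_norm_xi_sq_le by (simp add: ennreal_leI)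
  finally show "(\<integral>\<^sup>+ t. ennreal ((norm (xibar T N xi t))\<^sup>2) \<partial>lebesgue_on {0..T}) \<le> ennreal ((sqrt C_xi)\<^sup>2)"
    using C_xi_nonneg by simp
qed (use C_xi_nonneg in simp)

lemma L2_uhat_le: "L2_norm T (uhat T N u) \<le> ennreal (sqrt (108 * (c0\<^sup>2 + C_V)))"
  unfolding L2_norm_def
proof (rule ensqrt_le_ennreal)
  let ?h = "\<lambda>k. (norm (u k))\<^sup>2"
  define c where "c n = 27 * (?h n + ?h (n - 1) + ?h (n - 2))" for n
  have "(\<integral>\<^sup>+ t. ennreal ((norm (uhat T N u t))\<^sup>2) \<partial>lebesgue_on {0..T}) \<le> ennreal (\<tau> * (\<Sum>n\<in>{1..N}. c n))"
  proof (rule nn_integral_step_function_le[OF tau_pos N_tau, of "{}"])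
    fix t assume t: "t \<in> {0..T}"
    define n where "n = uhat_step t"
    have "norm (uhat T N u t) \<le> 3 * (norm (u n) + norm (u (n - 1)) + norm (u (n - 2)))"
      using norm_linear_uhat_le[OF bounded_linear_ident t] unfolding n_def by simp
    then have "(norm (uhat T N u t))\<^sup>2 \<le> (3 * (norm (u n) + norm (u (n - 1)) + norm (u (n - 2))))\<^sup>2"
      by (intro power_mono) auto
    also have "\<dots> = 9 * (norm (u n) + norm (u (n - 1)) + norm (u (n - 2)))\<^sup>2"
      by (simp only: power_mult_distrib) simp
    also have "\<dots> \<le> c n"
      unfolding c_def using mult_left_mono[OF square_add3_le[of "norm (u n)" "norm (u (n - 1))" "norm (u (n - 2))"], of 9]
      by simp
    finally show "\<exists>n\<in>{1..N}. t \<in> {(real n - 1) * \<tau> .. real n * \<tau>} \<and> (norm (uhat T N u t))\<^sup>2 \<le> c n"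
      using uhat_step_mem[OF t] unfolding n_def by blast
  qed (auto simp: c_def)
  also have "\<dots> \<le> ennreal (108 * (c0\<^sup>2 + C_V))"
  proof (rule ennreal_leI)
    have "(\<Sum>n\<in>{1..N}. c n) = 27 * ((\<Sum>n\<in>{1..N}. ?h n) + (\<Sum>n\<in>{1..N}. ?h (n - 1)) + (\<Sum>n\<in>{1..N}. ?h (n - 2)))"
      unfolding c_def by (simp add: sum.distrib sum_distrib_left)
    also have "\<dots> \<le> 108 * (\<Sum>k\<in>{0..N}. ?h k)"
      using sum_mono2[of "{0..N}" "{1..N}" ?h] sum_shift_pred_le[of ?h N] sum_shift_pred2_le[of ?h N] by simp
    finally have "\<tau> * (\<Sum>n\<in>{1..N}. c n) \<le> 108 * (\<tau> * (\<Sum>k\<in>{0..N}. ?h k))"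
      using tau_pos by (simp add: mult_left_mono)
    also have "\<dots> \<le> 108 * (c0\<^sup>2 + C_V)" using sum_norm_u_sq_le_with_init by simp
    finally show "\<tau> * (\<Sum>n\<in>{1..N}. c n) \<le> 108 * (c0\<^sup>2 + C_V)" .
  qed
  finally show "(\<integral>\<^sup>+ t. ennreal ((norm (uhat T N u t))\<^sup>2) \<partial>lebesgue_on {0..T}) \<le> ennreal ((sqrt (108 * (c0\<^sup>2 + C_V)))\<^sup>2)"
    using C_V_nonneg by simp
qed (use C_V_nonneg in simp)

lemma measurable_norm_j_ubar:
  "(\<lambda>t. ereal (norm (j (ubar T N u t)))) \<in> borel_measurable (lebesgue_on {0..T})"
proof -
  define k where "k t = (if t \<le> 0 then 0 else nat \<lceil>t / (T / real N)\<rceil>)" for t :: real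
  have "k \<in> lebesgue_on {0..T} \<rightarrow>\<^sub>M count_space UNIV" unfolding k_def by measurable
  moreover have "(\<lambda>t. ereal (norm (j (ubar T N u t)))) = (\<lambda>t. (\<lambda>i t. ereal (norm (j (u i)))) (k t) t)"
    unfolding ubar_def k_def by (auto simp: fun_eq_iff)
  ultimately show ?thesis by (auto intro: measurable_compose_countable')
qed

lemma measurable_norm_j_uhat:
  "(\<lambda>t. ereal (norm (j (uhat T N u t)))) \<in> borel_measurable (lebesgue_on {0..T})"
proof -
  define F where "F n t = ereal (sqrt ((norm (j ((3/2) *\<^sub>R u n - (1/2) *\<^sub>R u (n - 1))))\<^sup>2
      + 2 * (t - real n * \<tau>) * inner (j ((3/2) *\<^sub>R u n - (1/2) *\<^sub>R u (n - 1))) (j (dq n))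
      + (t - real n * \<tau>)\<^sup>2 * (norm (j (dq n)))\<^sup>2))" for n t
  have "uhat_step \<in> lebesgue_on {0..T} \<rightarrow>\<^sub>M count_space UNIV"
    unfolding uhat_step_def[abs_def] step_of_def by measurable
  moreover have "(\<lambda>t. ereal (norm (j (uhat T N u t)))) = (\<lambda>t. F (uhat_step t) t)"
    unfolding uhat_eq F_def by (auto simp: fun_eq_iff linear_simps[OF j_lin] norm_add_scaleR_eq_sqrt)
  moreover have "F n \<in> borel_measurable (lebesgue_on {0..T})" for n unfolding F_def by measurable
  ultimately show ?thesis by (auto intro: measurable_compose_countable')
qed

lemma Linf_ubar_le: "Linf_norm T (\<lambda>t. j (ubar T N u t)) \<le> ereal (sqrt (M0\<^sup>2 + C_energy))"
  unfolding Linf_norm_def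
proof (rule esssup_I[OF measurable_norm_j_ubar])
  show "AE t in lebesgue_on {0..T}. ereal (norm (j (ubar T N u t))) \<le> ereal (sqrt (M0\<^sup>2 + C_energy))"
  proof (rule AE_I2)
    fix t assume "t \<in> space (lebesgue_on {0..T})"
    then have t: "t \<in> {0..T}" by simp
    have "(norm (uH (step_of t)))\<^sup>2 \<le> M0\<^sup>2 + C_energy" using norm_uH_sq_le step_of_le t by auto
    then have "norm (uH (step_of t)) \<le> sqrt (M0\<^sup>2 + C_energy)" by (rule real_le_rsqrt)
    then show "ereal (norm (j (ubar T N u t))) \<le> ereal (sqrt (M0\<^sup>2 + C_energy))"
      using ubar_eq[OF t] unfolding uH_def by simp
  qed
qed

lemma Linf_uhat_le: "Linf_norm T (\<lambda>t. j (uhat T N u t)) \<le> ereal (9 * sqrt (M0\<^sup>2 + C_energy))"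
  unfolding Linf_norm_def
proof (rule esssup_I[OF measurable_norm_j_uhat])
  show "AE t in lebesgue_on {0..T}. ereal (norm (j (uhat T N u t))) \<le> ereal (9 * sqrt (M0\<^sup>2 + C_energy))"
  proof (rule AE_I2)
    fix t assume "t \<in> space (lebesgue_on {0..T})"
    then have t: "t \<in> {0..T}" by simp
    have bound: "norm (uH k) \<le> sqrt (M0\<^sup>2 + C_energy)" if "k \<le> N" for k
      using norm_uH_sq_le[OF that] by (rule real_le_rsqrt)
    have "uhat_step t \<le> N" "uhat_step t - 1 \<le> N" "uhat_step t - 2 \<le> N"
      using uhat_step_mem(1)[OF t] by auto
    then have "3 * (norm (uH (uhat_step t)) + norm (uH (uhat_step t - 1)) + norm (uH (uhat_step t - 2)))
        \<le> 9 * sqrt (M0\<^sup>2 + C_energy)"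
      using bound by (smt (verit))
    then show "ereal (norm (j (uhat T N u t))) \<le> ereal (9 * sqrt (M0\<^sup>2 + C_energy))"
      using norm_linear_uhat_le[OF j_lin t] unfolding uH_def by simp
  qed
qed

lemma BV2_ubar_le: "BV2_norm T (\<lambda>t. toVs j (ubar T N u t)) \<le> ennreal (sqrt ((3/2) * T * C_dq))"
  unfolding BV2_norm_def
proof (rule ensqrt_le_ennreal)
  show "(SUP p\<in>partitions T. ennreal (\<Sum>i < length p - 1.
      (norm (toVs j (ubar T N u (p ! Suc i)) - toVs j (ubar T N u (p ! i))))\<^sup>2))
    \<le> ennreal ((sqrt ((3/2) * T * C_dq))\<^sup>2)"
  proof (rule SUP_least)
    fix p assume "p \<in> partitions T"
    then have sorted: "sorted_wrt (<) p" and len: "length p \<ge> 2" and ends: "hd p = 0" "last p = T"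
      unfolding partitions_def by auto
    define L where "L = length p - 1"
    have "p \<noteq> []" using len by auto
    then have p0: "p ! 0 = 0" and pL: "p ! L = T"
      using ends unfolding L_def by (simp_all add: hd_conv_nth last_conv_nth)
    have p_mono: "p ! i \<le> p ! i'" if "i \<le> i'" "i' \<le> L" for i i'
    proof (cases "i = i'")
      case False
      then have "i < i'" "i' < length p" using that len unfolding L_def by auto
      then show ?thesis using sorted_wrt_nth_less[OF sorted] by fastforce
    qed simp
    have p_mem: "p ! i \<in> {0..T}" if "i \<le> L" for i
      using p_mono[of 0 i] p_mono[of i L] that p0 pL by simp
    have "(\<Sum>i<length p - 1. (norm (toVs j (ubar T N u (p ! Suc i)) - toVs j (ubar T N u (p ! i))))\<^sup>2)
        = (\<Sum>i<L. (norm (toVs j (u (step_of (p ! Suc i))) - toVs j (u (step_of (p ! i)))))\<^sup>2)"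
      unfolding L_def[symmetric] using p_mem by (intro sum.cong) (auto simp: ubar_eq)
    also have "\<dots> \<le> (3/2) * T * C_dq"
      using p_mono step_of_mono step_of_le[of "p ! L"] pL by (intro sum_chain_jumps_le) auto
    finally show "ennreal (\<Sum>i<length p - 1. (norm (toVs j (ubar T N u (p ! Suc i)) - toVs j (ubar T N u (p ! i))))\<^sup>2)
        \<le> ennreal ((sqrt ((3/2) * T * C_dq))\<^sup>2)"
      using T_pos C_dq_nonneg by (simp add: ennreal_leI)
  qed
qed (use T_pos C_dq_nonneg in simp)

lemma M22_ubar_le: "M22_norm T j (ubar T N u) \<le> ennreal (sqrt C_V + sqrt ((3/2) * T * C_dq))"
  unfolding M22_norm_def using add_mono[OF L2_ubar_le BV2_ubar_le] C_V_nonneg C_dq_nonneg T_pos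
  by (simp add: ennreal_plus)

lemma vector_derivative_uhat:
  assumes n: "n \<in> {1..N}" and t: "(real n - 1) * \<tau> < t" "t < real n * \<tau>"
  shows "vector_derivative (uhat T N u) (at t) = dq n"
proof -
  define S where "S = {(real n - 1) * \<tau> <..< real n * \<tau>}"
  have "uhat_step y = n" if "y \<in> S" for y
  proof -
    have "real n - 1 < y / \<tau>" "y / \<tau> < real n" using that tau_pos unfolding S_def by (auto simp: field_simps)
    then have "\<lceil>y / \<tau>\<rceil> = int n" by (subst ceiling_eq_iff) auto
    then show ?thesis unfolding uhat_step_def step_of_def using n by simp
  qed
  then have eq: "(3/2) *\<^sub>R u n - (1/2) *\<^sub>R u (n - 1) + (y - real n * \<tau>) *\<^sub>R dq n = uhat T N u y"
    if "y \<in> S" for y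
    using that by (simp add: uhat_eq)
  have "((\<lambda>y. (3/2) *\<^sub>R u n - (1/2) *\<^sub>R u (n - 1) + (y - real n * \<tau>) *\<^sub>R dq n)
      has_vector_derivative dq n) (at t)"
    by (auto intro!: derivative_eq_intros)
  then have "(uhat T N u has_vector_derivative dq n) (at t)"
    by (rule has_vector_derivative_transform_within_open[where S = S]) (use t eq in \<open>auto simp: S_def\<close>)
  then show ?thesis by (rule vector_derivative_at)
qed

lemma L2_uhat_deriv_le:
  "L2_norm T (\<lambda>t. toVs j (vector_derivative (uhat T N u) (at t))) \<le> ennreal (sqrt C_dq)"
  unfolding L2_norm_def
proof (rule ensqrt_le_ennreal)
  define G where "G = (\<lambda>k. real k * \<tau>) ` {0..N}"
  have "(\<integral>\<^sup>+ t. ennreal ((norm (toVs j (vector_derivative (uhat T N u) (at t))))\<^sup>2) \<partial>lebesgue_on {0..T})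
      \<le> ennreal (\<tau> * (\<Sum>n\<in>{1..N}. (norm (toVs j (dq n)))\<^sup>2))"
  proof (rule nn_integral_step_function_le[OF tau_pos N_tau, of G])
    fix t assume t: "t \<in> {0..T}" "t \<notin> G"
    have "0 \<in> G" unfolding G_def by force
    then have t0: "0 < t" using t by (cases "t = 0") auto
    define n where "n = step_of t"
    have n: "n \<in> {1..N}" "real n - 1 < t / \<tau>" "t / \<tau> \<le> real n" "t \<in> {(real n - 1) * \<tau> .. real n * \<tau>}"
      using step_of_mem[OF t0] t unfolding n_def by auto
    have "t \<noteq> real n * \<tau>" using t n(1) unfolding G_def by auto
    then have "(real n - 1) * \<tau> < t" "t < real n * \<tau>" using n(2,4) tau_pos by (auto simp: field_simps)
    then show "\<exists>n\<in>{1..N}. t \<in> {(real n - 1) * \<tau> .. real n * \<tau>} \<and>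
        (norm (toVs j (vector_derivative (uhat T N u) (at t))))\<^sup>2 \<le> (norm (toVs j (dq n)))\<^sup>2"
      using n vector_derivative_uhat[OF n(1)] by (intro bexI[of _ n]) auto
  qed (simp_all add: G_def)
  also have "\<dots> \<le> ennreal C_dq" using sum_norm_toVs_dq_sq_le by (simp add: ennreal_leI)
  finally show "(\<integral>\<^sup>+ t. ennreal ((norm (toVs j (vector_derivative (uhat T N u) (at t))))\<^sup>2) \<partial>lebesgue_on {0..T})
      \<le> ennreal ((sqrt C_dq)\<^sup>2)" using C_dq_nonneg by simp
qed (use C_dq_nonneg in simp)

definition "bound = 1 + sqrt C_V + sqrt (108 * (c0\<^sup>2 + C_V)) + 9 * sqrt (M0\<^sup>2 + C_energy) + sqrt C_xi
  + sqrt ((3/2) * T * C_dq) + sqrt C_dq"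

lemma interpolant_bounds:
  "0 < bound
    \<and> L2_norm T (ubar T N u) \<le> ennreal bound
    \<and> L2_norm T (uhat T N u) \<le> ennreal bound
    \<and> Linf_norm T (\<lambda>t. j (ubar T N u t)) \<le> ereal bound
    \<and> Linf_norm T (\<lambda>t. j (uhat T N u t)) \<le> ereal bound
    \<and> L2_norm T (xibar T N xi) \<le> ennreal bound
    \<and> M22_norm T j (ubar T N u) \<le> ennreal bound
    \<and> L2_norm T (\<lambda>t. toVs j (vector_derivative (uhat T N u) (at t))) \<le> ennreal bound"
proof -
  have "0 \<le> sqrt C_V" "0 \<le> sqrt (108 * (c0\<^sup>2 + C_V))" "0 \<le> sqrt (M0\<^sup>2 + C_energy)" "0 \<le> sqrt C_xi"
    "0 \<le> sqrt ((3/2) * T * C_dq)" "0 \<le> sqrt C_dq"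
    using C_V_nonneg C_energy_nonneg C_xi_nonneg C_dq_nonneg T_pos by simp_all
  then have le: "sqrt C_V \<le> bound" "sqrt (108 * (c0\<^sup>2 + C_V)) \<le> bound"
    "sqrt (M0\<^sup>2 + C_energy) \<le> bound" "9 * sqrt (M0\<^sup>2 + C_energy) \<le> bound" "sqrt C_xi \<le> bound"
    "sqrt C_V + sqrt ((3/2) * T * C_dq) \<le> bound" "sqrt C_dq \<le> bound" "0 < bound"
    unfolding bound_def by linarith+
  show ?thesis
  proof (intro conjI)
    show "L2_norm T (ubar T N u) \<le> ennreal bound"
      using L2_ubar_le ennreal_leI[OF le(1)] by (rule order_trans)
    show "L2_norm T (uhat T N u) \<le> ennreal bound"
      using L2_uhat_le ennreal_leI[OF le(2)] by (rule order_trans)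
    show "Linf_norm T (\<lambda>t. j (ubar T N u t)) \<le> ereal bound"
      using Linf_ubar_le le(3) by (simp add: order_trans)
    show "Linf_norm T (\<lambda>t. j (uhat T N u t)) \<le> ereal bound"
      using Linf_uhat_le le(4) by (simp add: order_trans)
    show "L2_norm T (xibar T N xi) \<le> ennreal bound"
      using L2_xibar_le ennreal_leI[OF le(5)] by (rule order_trans)
    show "M22_norm T j (ubar T N u) \<le> ennreal bound"
      using M22_ubar_le ennreal_leI[OF le(6)] by (rule order_trans)
    show "L2_norm T (\<lambda>t. toVs j (vector_derivative (uhat T N u) (at t))) \<le> ennreal bound"
      using L2_uhat_deriv_le ennreal_leI[OF le(7)] by (rule order_trans)
  qed (rule le(8))
qed

end

lemma eventually_bdf2_scheme:
  fixes j :: "'v::real_normed_vector \<Rightarrow> 'h::real_inner"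
    and i1 :: "'v \<Rightarrow> 'z::real_normed_vector" and i2 :: "'z \<Rightarrow> 'h" and iota2 :: "'z \<Rightarrow> 'u::real_normed_vector"
    and u :: "nat \<Rightarrow> nat \<Rightarrow> 'v" and xi :: "nat \<Rightarrow> nat \<Rightarrow> ('u \<Rightarrow>\<^sub>L real)"
  assumes j_lin: "bounded_linear j" and iota_lin: "bounded_linear iota"
    and i1_compact: "compact_operator i1" and i2_lin: "bounded_linear i2" and i2_inj: "inj i2"
    and j_factor: "j = i2 \<circ> i1" and iota2_lin: "bounded_linear iota2" and iota_factor: "iota = iota2 \<circ> i1"
    and A_growth: "\<And>v. norm (A v) \<le> a + b * norm v" "a \<ge> 0" "b > 0"
    and A_coerc: "\<And>v. blinfun_apply (A v) v \<ge> \<alpha> * (norm v)\<^sup>2 - \<beta> * (norm (j v))\<^sup>2" "\<alpha> > 0" "\<beta> \<ge> 0"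
    and J_growth: "\<And>w \<xi>. \<xi> \<in> clarke_subdiff J w \<Longrightarrow> norm \<xi> \<le> d * (1 + norm w)" "d > 0"
    and T_pos: "T > 0"
    and f_meas: "f \<in> borel_measurable (lebesgue_on {0..T})"
    and f_L2: "(\<integral>\<^sup>+ t. ennreal ((norm (f t))\<^sup>2) \<partial>lebesgue_on {0..T}) < \<infinity>"
    and init_H: "Bseq (\<lambda>N. j (u N 0))"
    and init_V: "\<And>N. N > 0 \<Longrightarrow> norm (u N 0) \<le> c0 / sqrt (T / real N)"
    and sol: "eventually (\<lambda>N. rothe_solution j A iota J f T N (u N) (xi N)) sequentially"
  shows "\<exists>Ki Ce \<Phi> M0. eventually (\<lambda>N.
    bdf2_scheme j A iota J f T N (u N) (xi N) \<alpha> \<beta> d a b Ki Ce \<Phi> M0 c0) sequentially"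
proof -
  obtain Ki where Ki: "\<And>v. norm (iota v) \<le> Ki * norm v" "Ki \<ge> 0"
    using bounded_linear.nonneg_bounded[OF iota_lin] by (metis mult.commute)
  have "\<alpha> / (6 * d) > 0" using A_coerc(2) J_growth(2) by simp
  then obtain Ce where Ce: "\<And>v. (norm (iota v))\<^sup>2 \<le> \<alpha> / (6 * d) * (norm v)\<^sup>2 + Ce * (norm (j v))\<^sup>2" "Ce \<ge> 0"
    using compact_operator_ehrling_squared[OF i1_compact i2_lin i2_inj iota2_lin]
    unfolding iota_factor j_factor comp_def by blast
  define \<Phi> where "\<Phi> = enn2real (\<integral>\<^sup>+ t. ennreal ((norm (f t))\<^sup>2) \<partial>lebesgue_on {0..T})"
  have \<Phi>: "(\<integral>\<^sup>+ t. ennreal ((norm (f t))\<^sup>2) \<partial>lebesgue_on {0..T}) = ennreal \<Phi>" "\<Phi> \<ge> 0"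
    unfolding \<Phi>_def using f_L2 by (simp_all add: less_top[symmetric])
  obtain M0 where M0: "\<And>N. norm (j (u N 0)) \<le> M0" using init_H by (metis BseqE less_imp_le)
  have small: "eventually (\<lambda>N. (T / real N) * (\<beta> + 3 * d * Ce / 2) \<le> 1/8) sequentially"
  proof -
    have "((\<lambda>N. (T * (\<beta> + 3 * d * Ce / 2)) / real N) \<longlonglongrightarrow> 0)" by (rule lim_const_over_n)
    then have "eventually (\<lambda>N. (T * (\<beta> + 3 * d * Ce / 2)) / real N < 1/8) sequentially"
      by (rule order_tendstoD(2)) simp
    then show ?thesis by eventually_elim simp
  qed
  have init: "(T / real N) * (norm (u N 0))\<^sup>2 \<le> c0\<^sup>2" if "N > 0" for N
  proof -
    have \<tau>: "T / real N > 0" using T_pos that by simp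
    have "(norm (u N 0))\<^sup>2 \<le> (c0 / sqrt (T / real N))\<^sup>2" using init_V[OF that] by (intro power_mono) auto
    also have "\<dots> = c0\<^sup>2 / (T / real N)" using \<tau> by (simp add: power_divide)
    finally have "(T / real N) * (norm (u N 0))\<^sup>2 \<le> (T / real N) * (c0\<^sup>2 / (T / real N))"
      using \<tau> by (intro mult_left_mono) auto
    then show ?thesis using \<tau> that T_pos by simp
  qed
  have "eventually (\<lambda>N. bdf2_scheme j A iota J f T N (u N) (xi N) \<alpha> \<beta> d a b Ki Ce \<Phi> M0 c0) sequentially"
    using sol small eventually_gt_at_top[of 0]
  proof eventually_elim
    case (elim N)
    then show ?case
      by (intro bdf2_scheme.intro) (use j_lin Ki Ce A_growth A_coerc J_growth T_pos f_meas \<Phi> M0 init in auto)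
  qed
  then show ?thesis by blast
qed

theorem lemma4p4:
  fixes j :: "'v::banach \<Rightarrow> 'h::{real_inner, complete_space}"
    and i1 :: "'v \<Rightarrow> 'z::banach" and i2 :: "'z \<Rightarrow> 'h" and iota2 :: "'z \<Rightarrow> 'u::banach"
    and iota :: "'v \<Rightarrow> 'u"
    and A :: "'v \<Rightarrow> ('v \<Rightarrow>\<^sub>L real)"
    and J :: "'u \<Rightarrow> real"
    and f :: "real \<Rightarrow> ('v \<Rightarrow>\<^sub>L real)"
    and u0 :: 'h
    and T a b \<alpha> \<beta> d c0 :: real
    and u :: "nat \<Rightarrow> nat \<Rightarrow> 'v"
    and xi :: "nat \<Rightarrow> nat \<Rightarrow> ('u \<Rightarrow>\<^sub>L real)"
  assumes V_refl: "reflexive_space TYPE('v)" and V_sep: "separable_space TYPE('v)"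
    and H_sep: "separable_space TYPE('h)"
    and U_refl: "reflexive_space TYPE('u)"
    \<comment> \<open>V \<subset> H \<subset> V* dense continuous embeddings, V \<subset> H compact\<close>
    and j_lin: "bounded_linear j" and j_inj: "inj j" and j_dense: "closure (range j) = UNIV"
    and j_compact: "compact_operator j"
    and H_Vs_inj: "inj (HtoVs j)" and H_Vs_dense: "closure (range (HtoVs j)) = UNIV"
    \<comment> \<open>H(A)\<close>
    and A_pm: "pseudomonotone A"
    and a_nonneg: "a \<ge> 0" and b_pos: "b > 0"
    and A_growth: "\<And>v. norm (A v) \<le> a + b * norm v"
    and alpha_pos: "\<alpha> > 0" and beta_nonneg: "\<beta> \<ge> 0"
    and A_coerc: "\<And>v. blinfun_apply (A v) v \<ge> \<alpha> * (norm v)\<^sup>2 - \<beta> * (norm (j v))\<^sup>2"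
    \<comment> \<open>H(J)\<close>
    and J_loclip: "locally_lipschitz J" and d_pos: "d > 0"
    and J_growth: "\<And>w \<xi>. \<xi> \<in> clarke_subdiff J w \<Longrightarrow> norm \<xi> \<le> d * (1 + norm w)"
    \<comment> \<open>H(iota)\<close>
    and iota_lin: "bounded_linear iota" and iota_compact: "compact_operator iota"
    and i1_lin: "bounded_linear i1" and i1_inj: "inj i1" and i1_compact: "compact_operator i1"
    and i2_lin: "bounded_linear i2" and i2_inj: "inj i2" and j_factor: "j = i2 \<circ> i1"
    and iota2_lin: "bounded_linear iota2" and iota_factor: "iota = iota2 \<circ> i1"
    \<comment> \<open>H(f), H(0), T\<close>
    and T_pos: "T > 0"
    and f_meas: "f \<in> borel_measurable (lebesgue_on {0..T})"
    and f_L2: "(\<integral>\<^sup>+ t. ennreal ((norm (f t))\<^sup>2) \<partial>lebesgue_on {0..T}) < \<infinity>"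
    \<comment> \<open>initial values u_tau^0 = u N 0, tau = T/N\<close>
    and u0_conv: "(\<lambda>N. j (u N 0)) \<longlonglongrightarrow> u0"
    and u0_bound: "\<And>N. N > 0 \<Longrightarrow> norm (u N 0) \<le> c0 / sqrt (T / real N)"
    \<comment> \<open>for all sufficiently small tau, (u N, xi N) solves Problem P_tau\<close>
    and sol: "eventually (\<lambda>N. rothe_solution j A iota J f T N (u N) (xi N)) sequentially"
  shows "\<exists>c>0. eventually (\<lambda>N.
            L2_norm T (ubar T N (u N)) \<le> ennreal c
          \<and> L2_norm T (uhat T N (u N)) \<le> ennreal c
          \<and> Linf_norm T (\<lambda>t. j (ubar T N (u N) t)) \<le> ereal c
          \<and> Linf_norm T (\<lambda>t. j (uhat T N (u N) t)) \<le> ereal c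
          \<and> L2_norm T (xibar T N (xi N)) \<le> ennreal c
          \<and> M22_norm T j (ubar T N (u N)) \<le> ennreal c
          \<and> L2_norm T (\<lambda>t. toVs j (vector_derivative (uhat T N (u N)) (at t))) \<le> ennreal c)
        sequentially"
proof -
  have "Bseq (\<lambda>N. j (u N 0))" using u0_conv by (intro convergent_imp_Bseq convergentI)
  then obtain Ki Ce \<Phi> M0
    where scheme: "eventually (\<lambda>N. bdf2_scheme j A iota J f T N (u N) (xi N) \<alpha> \<beta> d a b Ki Ce \<Phi> M0 c0) sequentially"
    using eventually_bdf2_scheme[OF j_lin iota_lin i1_compact i2_lin i2_inj j_factor iota2_lin iota_factor
        A_growth a_nonneg b_pos A_coerc alpha_pos beta_nonneg J_growth d_pos T_pos f_meas f_L2 _ u0_bound sol]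
    by blast
  let ?c = "bdf2_scheme.bound T \<alpha> \<beta> d a b Ki Ce \<Phi> M0 c0"
  obtain N0 where "bdf2_scheme j A iota J f T N0 (u N0) (xi N0) \<alpha> \<beta> d a b Ki Ce \<Phi> M0 c0"
    using eventually_happens'[OF sequentially_bot scheme] by blast
  then have "0 < ?c" by (rule bdf2_scheme.interpolant_bounds[THEN conjunct1])
  then show ?thesis
    using scheme by (intro exI[of _ ?c] conjI) (auto elim!: eventually_mono dest: bdf2_scheme.interpolant_bounds)
qed

end
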